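(* Consider the extremum seeking system with feedback law $u_{i,1}(J(x),\tau)=\sqrt{2\omega_i}\cos(J(x)+\omega_i\tau)$, $u_{i,2}(J(x),\tau)=\sqrt{2\omega_i}\sin(J(x)+\omega_i\tau)$, written in shifted coordinates $\tilde x=x-x^\star$: $$\dot{\tilde x}=b_0(\tilde x+x^\star)+\varepsilon^{-1}\sum_{i=1}^r\sum_{j=1}^2b_{i,j}u_{i,j}(J(\tilde x+x^\star),\tau),\qquad\dot\tau=\varepsilon^{-2}.$$ Suppose the Excitation Assumption holds with constant $\gamma$ and the Regularity Assumption holds with constant $\kappa_3$, with $\gamma>\kappa_3$, and suppose $J$ is a radially unbounded $\mathcal{C}^2$ function for which there exist $\alpha_J\in\mathcal{K}$ and $M_J>0$ with $\alpha_J(|x-x^\star|)^2\le|\nabla J(x)|^2\le M_J^2$ for all $x\in\mathbb{R}^n$. Then the origin $\tilde x=0$ is uniformly globally practically asymptotically stable for this system.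
   Context: $|\cdot|$ is the Euclidean norm; $\mathcal{K},\mathcal{KL}$ standard comparison-function classes. Data: $n\ge1$, $r$ a positive integer with $r\ge n/2$, vectors $b_{i,j}\in\mathbb{R}^n$ ($i=1,\dots,r$, $j=1,2$), distinct positive rationals $\omega_1,\dots,\omega_r$, a map $b_0:\mathbb{R}^n\to\mathbb{R}^n$, a cost $J:\mathbb{R}^n\to\mathbb{R}$ with $J^\star:=\inf_xJ(x)>-\infty$ attained at a unique $x^\star$, and a parameter $\varepsilon>0$. Excitation Assumption: there is $\gamma>0$ with $\sum_{i=1}^r\sum_{j=1}^2(b_{i,j}^\top v)^2\ge\gamma|v|^2$ for all $v\in\mathbb{R}^n$. Regularity Assumption: (a) $J(x)>J(x^\star)$ for $x\ne x^\star$; (b) $\nabla J(x)=0$ iff $x=x^\star$; (c) there is $L_J>0$ with $|\nabla^2J(x)|\le L_J$ for all $x$; (d) there is $\kappa_3>0$ with $|b_0(x)|\le\kappa_3|\nabla J(x)|$ for all $x$; (e) there is $L_0>0$ with $|b_0(x_1)-b_0(x_2)|\le L_0|x_1-x_2|$ for all $x_1,x_2$. Solutions: for initial $(\tilde x_0,\tau_0)\in\mathbb{R}^n\times\mathbb{R}_{\ge0}$, a $\mathcal{C}^1$ function on $[0,t_s)$, $t_s\in(0,\infty]$, satisfying the ODE and initial condition. The origin is uniformly globally practically asymptotically stable if there is $\beta\in\mathcal{KL}$ such that for every $\nu>0$ there is $\varepsilon^*>0$ such that for all $\varepsilon\in(0,\varepsilon^* )$ every solution from every initial condition is defined for all $t\ge0$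 and satisfies $|\tilde x(t)|\le\beta(|\tilde x_0|,t)+\nu$ for all $t\ge0$. *)

theory Defs
  imports "HOL-Analysis.Analysis"
begin

definition class_K :: "(real \<Rightarrow> real) \<Rightarrow> bool" where
  "class_K \<alpha> \<longleftrightarrow> continuous_on {0..} \<alpha> \<and> \<alpha> 0 = 0 \<and> strict_mono_on {0..} \<alpha>"

definition class_KL :: "(real \<Rightarrow> real \<Rightarrow> real) \<Rightarrow> bool" where
  "class_KL \<beta> \<longleftrightarrow> continuous_on ({0..} \<times> {0..}) (\<lambda>(s,t). \<beta> s t)
     \<and> (\<forall>t\<ge>0. class_K (\<lambda>s. \<beta> s t))
     \<and> (\<forall>s\<ge>0. antimono_on {0..} (\<beta> s) \<and> ((\<beta> s) \<longlongrightarrow> 0) at_top)"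

definition dither :: "(nat \<Rightarrow> real) \<Rightarrow> nat \<Rightarrow> nat \<Rightarrow> real \<Rightarrow> real \<Rightarrow> real" where
  "dither \<omega> i j y \<tau> =
     (if j = 1 then sqrt (2 * \<omega> i) * cos (y + \<omega> i * \<tau>)
      else sqrt (2 * \<omega> i) * sin (y + \<omega> i * \<tau>))"

definition es_rhs :: "('a::euclidean_space \<Rightarrow> 'a) \<Rightarrow> ('a \<Rightarrow> real) \<Rightarrow> 'a \<Rightarrow> nat
    \<Rightarrow> (nat \<Rightarrow> nat \<Rightarrow> 'a) \<Rightarrow> (nat \<Rightarrow> real) \<Rightarrow> real \<Rightarrow> 'a \<Rightarrow> real \<Rightarrow> 'a" where
  "es_rhs b0 J xs r b \<omega> \<epsilon> x \<tau> =
     b0 (x + xs) + (1 / \<epsilon>) *\<^sub>R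
       (\<Sum>i\<in>{1..r}. \<Sum>j\<in>{1,2}. dither \<omega> i j (J (x + xs)) \<tau> *\<^sub>R b i j)"

definition dom_ts :: "ereal \<Rightarrow> real set" where
  "dom_ts ts = {t. 0 \<le> t \<and> ereal t < ts}"

definition es_solution :: "('a::euclidean_space \<Rightarrow> 'a) \<Rightarrow> ('a \<Rightarrow> real) \<Rightarrow> 'a \<Rightarrow> nat
    \<Rightarrow> (nat \<Rightarrow> nat \<Rightarrow> 'a) \<Rightarrow> (nat \<Rightarrow> real) \<Rightarrow> real \<Rightarrow> 'a \<Rightarrow> real \<Rightarrow> ereal
    \<Rightarrow> (real \<Rightarrow> 'a) \<Rightarrow> (real \<Rightarrow> real) \<Rightarrow> bool" where
  "es_solution b0 J xs r b \<omega> \<epsilon> x0 \<tau>0 ts X T \<longleftrightarrow>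
     ts > 0 \<and> X 0 = x0 \<and> T 0 = \<tau>0 \<and>
     continuous_on (dom_ts ts) (\<lambda>t. es_rhs b0 J xs r b \<omega> \<epsilon> (X t) (T t)) \<and>
     (\<forall>t\<in>dom_ts ts.
        (X has_vector_derivative es_rhs b0 J xs r b \<omega> \<epsilon> (X t) (T t)) (at t within dom_ts ts) \<and>
        (T has_vector_derivative 1 / \<epsilon>\<^sup>2) (at t within dom_ts ts))"

definition es_UGpAS :: "('a::euclidean_space \<Rightarrow> 'a) \<Rightarrow> ('a \<Rightarrow> real) \<Rightarrow> 'a \<Rightarrow> nat
    \<Rightarrow> (nat \<Rightarrow> nat \<Rightarrow> 'a) \<Rightarrow> (nat \<Rightarrow> real) \<Rightarrow> bool" where
  "es_UGpAS b0 J xs r b \<omega> \<longleftrightarrow>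
     (\<exists>\<beta>. class_KL \<beta> \<and>
       (\<forall>\<nu>>0. \<exists>\<epsilon>s>0. \<forall>\<epsilon>. 0 < \<epsilon> \<and> \<epsilon> < \<epsilon>s \<longrightarrow>
          (\<forall>x0 \<tau>0 ts X T. \<tau>0 \<ge> 0 \<and> es_solution b0 J xs r b \<omega> \<epsilon> x0 \<tau>0 ts X T \<longrightarrow>
             (\<exists>X' T'. es_solution b0 J xs r b \<omega> \<epsilon> x0 \<tau>0 \<infinity> X' T' \<and>
                 (\<forall>t\<in>dom_ts ts. X' t = X t \<and> T' t = T t)) \<and>
             (\<forall>t\<in>dom_ts ts. norm (X t) \<le> \<beta> (norm x0) t + \<nu>))))"

end

theory Submission
  imports Defs
begin

text \<open>The frequencies are rational, so the dithers have a common period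
  \<open>T\<close>, and the fast time \<open>\<tau> = t / \<epsilon>\<^sup>2\<close> runs through one period in time \<open>\<epsilon>\<^sup>2 T\<close>. Over such a window the
  state moves by \<open>\<epsilon>\<close> times a periodic oscillation (which integrates to zero), by the drift \<open>b0\<close>, and by the
  Lie-bracket drift of the dither vector fields: expanding the dithers to first order in \<open>J\<close>, the products
  of the cosine and sine inputs at equal frequency leave \<open>- \<epsilon>\<^sup>2 T \<Sum> (\<nabla>J \<bullet> b i j)\<^sup>2 \<le> - \<epsilon>\<^sup>2 T \<gamma> |\<nabla>J|\<^sup>2\<close>,
  while distinct frequencies average out. Hence, up to \<open>O(\<epsilon>\<^sup>3 T)\<close>, the cost gap \<open>J (x + xs) - J xs\<close> drops by
  \<open>\<epsilon>\<^sup>2 T (\<gamma> - \<kappa>3) |\<nabla>J|\<^sup>2\<close> per period. Since \<open>|\<nabla>J|\<close> is bounded below by a class K function of the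
  cost gap, the sampled cost gap satisfies a discrete comparison inequality whose solution is a KL bound up to
  \<open>O(\<epsilon>)\<close>; a class K lower bound for the proper cost gap turns this into a bound on \<open>|x|\<close>. Existence of
  global solutions comes from the global Lipschitz bound on the right-hand side.\<close>

section \<open>Calculus and ordinary differential equations\<close>

lemma norm_diff_le_of_vector_derivative_bound:
  fixes g :: "real \<Rightarrow> 'a::real_normed_vector"
  assumes "a \<le> b"
    and deriv: "\<And>t. t \<in> {a..b} \<Longrightarrow> (g has_vector_derivative g' t) (at t within {a..b})"
    and bound: "\<And>t. t \<in> {a..b} \<Longrightarrow> norm (g' t) \<le> B"
  shows "norm (g b - g a) \<le> B * (b - a)"
proof -
  have "norm (g b - g a) \<le> B * norm (b - a)"
    by (rule differentiable_bound[of "{a..b}" g "\<lambda>t h. h *\<^sub>R g' t"])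
      (use deriv bound \<open>a \<le> b\<close> in \<open>auto simp: has_vector_derivative_def mult.commute[of B]
        intro!: onorm_le mult_left_mono\<close>)
  then show ?thesis using \<open>a \<le> b\<close> by simp
qed

lemma real_nonincreasing_of_deriv_nonpos:
  fixes h :: "real \<Rightarrow> real"
  assumes "a \<le> b"
    and deriv: "\<And>t. t \<in> {a..b} \<Longrightarrow> (h has_real_derivative h' t) (at t within {a..b})"
    and nonpos: "\<And>t. t \<in> {a..b} \<Longrightarrow> h' t \<le> 0"
  shows "h b \<le> h a"
proof -
  have "\<exists>x\<in>{a..b}. h b - h a = h' x * (b - a)"
    by (rule mvt_very_simple[OF \<open>a \<le> b\<close>, of h "\<lambda>t. (*) (h' t)"])
      (use deriv in \<open>auto simp: has_field_derivative_def\<close>)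
  then obtain x where x: "x \<in> {a..b}" "h b - h a = h' x * (b - a)" by blast
  have "h' x * (b - a) \<le> 0" using nonpos[OF x(1)] \<open>a \<le> b\<close> by (simp add: mult_nonpos_nonneg)
  then show ?thesis using x by simp
qed

lemma abs_diff_le_of_deriv_bound:
  fixes g :: "real \<Rightarrow> real"
  assumes d: "\<And>s. (g has_real_derivative g' s) (at s)" and C: "\<And>s. \<bar>g' s\<bar> \<le> C"
  shows "\<bar>g y - g x\<bar> \<le> C * \<bar>y - x\<bar>"
proof -
  have "norm (g y - g x) \<le> C * norm (y - x)"
  proof (rule differentiable_bound[of UNIV g "\<lambda>s. (*) (g' s)"])
    show "(g has_derivative (*) (g' s)) (at s within UNIV)" for s
      using d by (simp add: has_field_derivative_def)
    show "onorm ((*) (g' s)) \<le> C" for s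
      using C by (intro onorm_le) (simp add: abs_mult mult_right_mono)
  qed auto
  then show ?thesis by simp
qed

lemma abs_taylor_le_of_second_deriv_bound:
  fixes g :: "real \<Rightarrow> real"
  assumes d: "\<And>s. (g has_real_derivative g' s) (at s)" and d2: "\<And>s. (g' has_real_derivative g'' s) (at s)"
    and C: "\<And>s. \<bar>g'' s\<bar> \<le> C"
  shows "\<bar>g y - g x - g' x * (y - x)\<bar> \<le> C * (y - x)\<^sup>2"
proof -
  have C0: "C \<ge> 0" using C[of 0] by linarith
  have "norm ((g y - g' x * y) - (g x - g' x * x)) \<le> (C * \<bar>y - x\<bar>) * norm (y - x)"
  proof (rule differentiable_bound[of "closed_segment x y" "\<lambda>s. g s - g' x * s" "\<lambda>s h. (g' s - g' x) * h"])
    fix s assume s: "s \<in> closed_segment x y"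
    have "((\<lambda>s. g s - g' x * s) has_real_derivative (g' s - g' x)) (at s within closed_segment x y)"
      by (rule derivative_eq_intros has_field_derivative_at_within[OF d] | simp)+
    then show "((\<lambda>s. g s - g' x * s) has_derivative (\<lambda>h. (g' s - g' x) * h)) (at s within closed_segment x y)"
      by (simp add: has_field_derivative_def)
    have "\<bar>g' s - g' x\<bar> \<le> C * \<bar>s - x\<bar>" by (rule abs_diff_le_of_deriv_bound[OF d2 C])
    also have "\<dots> \<le> C * \<bar>y - x\<bar>" using segment_bound1[OF s] C0 by (auto intro: mult_left_mono)
    finally show "onorm (\<lambda>h. (g' s - g' x) * h) \<le> C * \<bar>y - x\<bar>"
      by (intro onorm_le) (auto simp: abs_mult intro: mult_right_mono)
  qed auto
  then show ?thesis by (simp add: algebra_simps power2_eq_square abs_mult)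
qed

lemma lipschitz_of_bounded_derivative:
  fixes f :: "'a::real_normed_vector \<Rightarrow> 'b::real_normed_vector"
  assumes "\<And>x. (f has_derivative blinfun_apply (f' x)) (at x)" and "\<And>x. norm (f' x) \<le> L"
  shows "norm (f x - f y) \<le> L * norm (x - y)"
  by (rule differentiable_bound[of UNIV])
    (use assms in \<open>auto simp: norm_blinfun.rep_eq[symmetric]\<close>)

primrec picard_iterate :: "(real \<Rightarrow> 'a \<Rightarrow> 'a) \<Rightarrow> 'a \<Rightarrow> nat \<Rightarrow> real \<Rightarrow> 'a::euclidean_space" where
  "picard_iterate f x0 0 = (\<lambda>t. x0)"
| "picard_iterate f x0 (Suc k) = (\<lambda>t. x0 + integral {0..t} (\<lambda>s. f s (picard_iterate f x0 k s)))"

definition picard_limit :: "(real \<Rightarrow> 'a \<Rightarrow> 'a) \<Rightarrow> 'a \<Rightarrow> real \<Rightarrow> 'a::euclidean_space" where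
  "picard_limit f x0 t = x0 + (\<Sum>k. picard_iterate f x0 (Suc k) t - picard_iterate f x0 k t)"

context
  fixes f :: "real \<Rightarrow> 'a::euclidean_space \<Rightarrow> 'a" and L B :: real
  assumes f_cont: "continuous_on UNIV (\<lambda>(t, x). f t x)"
    and f_lipschitz: "\<And>t x y. norm (f t x - f t y) \<le> L * norm (x - y)" and L_pos: "L > 0"
    and f_bounded: "\<And>t x. norm (f t x) \<le> B"
begin

private lemma continuous_on_compose_rhs:
  assumes "continuous_on S \<phi>"
  shows "continuous_on S (\<lambda>s. f s (\<phi> s))"
proof -
  have "continuous_on S (\<lambda>s. (s, \<phi> s))" using assms by (intro continuous_on_Pair continuous_on_id)
  from continuous_on_compose2[OF f_cont this] show ?thesis by simp
qed

lemma continuous_on_picard_iterate: "continuous_on {0..N} (picard_iterate f x0 k)"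
proof (induction k)
  case (Suc k)
  then have "continuous_on {0..N} (\<lambda>t. integral {0..t} (\<lambda>s. f s (picard_iterate f x0 k s)))"
    by (intro indefinite_integral_continuous_1 integrable_continuous_interval continuous_on_compose_rhs)
  then show ?case by (simp add: continuous_on_add)
qed simp

lemma picard_iterate_step_bound:
  assumes "t \<ge> 0"
  shows "norm (picard_iterate f x0 (Suc k) t - picard_iterate f x0 k t) \<le> B * L ^ k * t ^ Suc k / fact (Suc k)"
  using assms
proof (induction k arbitrary: t)
  case 0
  have "norm (integral {0..t} (\<lambda>s. f s x0)) \<le> B * (t - 0)"
    by (rule integral_bound) (use 0 continuous_on_compose_rhs[of _ "\<lambda>s. x0"] f_bounded in auto)
  then show ?case by simp
next
  case (Suc k)
  let ?p = "picard_iterate f x0"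
  let ?g = "\<lambda>s. f s (?p (Suc k) s) - f s (?p k s)"
  let ?h = "\<lambda>s. L * (B * L ^ k * s ^ Suc k / fact (Suc k))"
  have cont: "continuous_on {0..t} (\<lambda>s. f s (?p j s))" for j
    by (rule continuous_on_compose_rhs[OF continuous_on_picard_iterate])
  have "?p (Suc (Suc k)) t - ?p (Suc k) t
      = integral {0..t} (\<lambda>s. f s (?p (Suc k) s)) - integral {0..t} (\<lambda>s. f s (?p k s))"
    by simp
  also have "\<dots> = integral {0..t} ?g"
    by (rule integral_diff[symmetric]) (intro integrable_continuous_interval cont)+
  finally have step: "?p (Suc (Suc k)) t - ?p (Suc k) t = integral {0..t} ?g" .
  have h_int: "(?h has_integral B * L ^ Suc k * t ^ Suc (Suc k) / fact (Suc (Suc k))) {0..t}"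
  proof -
    have "(?h has_integral B * L ^ Suc k * t ^ Suc (Suc k) / fact (Suc (Suc k))
        - B * L ^ Suc k * 0 ^ Suc (Suc k) / fact (Suc (Suc k))) {0..t}"
    proof (rule fundamental_theorem_of_calculus)
      fix x assume "x \<in> {0..t}"
      show "((\<lambda>s. B * L ^ Suc k * s ^ Suc (Suc k) / fact (Suc (Suc k))) has_vector_derivative ?h x)
          (at x within {0..t})"
        unfolding has_real_derivative_iff_has_vector_derivative[symmetric]
        by (rule derivative_eq_intros refl | simp)+
    qed (use Suc.prems in simp)
    then show ?thesis by simp
  qed
  have "norm (integral {0..t} ?g) \<le> integral {0..t} ?h"
  proof (rule integral_norm_bound_integral)
    show "?g integrable_on {0..t}" by (intro integrable_continuous_interval continuous_on_diff cont)
    show "?h integrable_on {0..t}" using h_int by blast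
    fix s assume s: "s \<in> {0..t}"
    have "norm (?g s) \<le> L * norm (?p (Suc k) s - ?p k s)" by (rule f_lipschitz)
    also have "\<dots> \<le> ?h s" using mult_left_mono[OF Suc.IH[of s], of L] s L_pos by (simp del: picard_iterate.simps)
    finally show "norm (?g s) \<le> ?h s" .
  qed
  also have "\<dots> = B * L ^ Suc k * t ^ Suc (Suc k) / fact (Suc (Suc k))"
    using integral_unique[OF h_int] .
  finally show ?case using step by simp
qed

lemma picard_iterate_uniform_limit:
  assumes "N \<ge> 0"
  shows "uniform_limit {0..N} (picard_iterate f x0) (picard_limit f x0) sequentially"
proof -
  define d where "d k t = picard_iterate f x0 (Suc k) t - picard_iterate f x0 k t" for k t
  define m where "m k = (B / L) * ((L * N) ^ Suc k / fact (Suc k))" for k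
  have "B \<ge> 0" using f_bounded[of 0 x0] norm_ge_zero[of "f 0 x0"] by linarith
  have d_le_m: "norm (d k t) \<le> m k" if "t \<in> {0..N}" for k t
  proof -
    have "norm (d k t) \<le> B * L ^ k * t ^ Suc k / fact (Suc k)"
      using picard_iterate_step_bound[of t] that by (simp add: d_def)
    also have "\<dots> \<le> B * L ^ k * N ^ Suc k / fact (Suc k)"
      using that \<open>B \<ge> 0\<close> L_pos by (intro divide_right_mono mult_left_mono power_mono) auto
    also have "\<dots> = m k" using L_pos by (simp add: m_def power_mult_distrib field_simps)
    finally show ?thesis .
  qed
  have "summable (\<lambda>k. inverse (fact k) * (L * N) ^ k)" by (rule summable_exp)
  then have "summable (\<lambda>k. inverse (fact (Suc k)) * (L * N) ^ Suc k)"
    using summable_ignore_initial_segment[of "\<lambda>k. inverse (fact k) * (L * N) ^ k" 1]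
    by (simp del: fact_Suc power_Suc)
  then have "summable m" unfolding m_def by (intro summable_mult) (simp add: field_simps)
  then have "uniform_limit {0..N} (\<lambda>n t. \<Sum>k<n. d k t) (\<lambda>t. \<Sum>k. d k t) sequentially"
    using d_le_m by (intro Weierstrass_m_test) auto
  then have "uniform_limit {0..N} (\<lambda>n t. x0 + (\<Sum>k<n. d k t)) (\<lambda>t. x0 + (\<Sum>k. d k t)) sequentially"
    by (intro uniform_limit_add uniform_limit_const)
  moreover have "picard_iterate f x0 = (\<lambda>n t. x0 + (\<Sum>k<n. d k t))"
  proof (intro ext)
    show "picard_iterate f x0 n t = x0 + (\<Sum>k<n. d k t)" for n t
      by (induction n) (simp_all add: d_def)
  qed
  moreover have "picard_limit f x0 = (\<lambda>t. x0 + (\<Sum>k. d k t))"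
    unfolding picard_limit_def d_def ..
  ultimately show ?thesis by (simp only:)
qed

lemma continuous_on_picard_limit: "N \<ge> 0 \<Longrightarrow> continuous_on {0..N} (picard_limit f x0)"
  by (rule uniform_limit_theorem[OF always_eventually picard_iterate_uniform_limit])
    (auto intro: continuous_on_picard_iterate)

lemma integral_picard_iterate_tendsto:
  assumes t: "t \<ge> 0"
  shows "(\<lambda>n. integral {0..t} (\<lambda>s. f s (picard_iterate f x0 n s)))
    \<longlonglongrightarrow> integral {0..t} (\<lambda>s. f s (picard_limit f x0 s))"
proof (rule LIMSEQ_I)
  let ?p = "picard_iterate f x0" and ?Y = "picard_limit f x0"
  fix e :: real assume "e > 0"
  define e' where "e' = e / (L * (t + 1))"
  have "e' > 0" using \<open>e > 0\<close> L_pos t by (simp add: e'_def)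
  obtain n0 where n0: "\<And>n. n \<ge> n0 \<Longrightarrow> \<forall>s\<in>{0..t}. dist (?p n s) (?Y s) < e'"
    using uniform_limitD[OF picard_iterate_uniform_limit[OF t] \<open>e' > 0\<close>] by (auto simp: eventually_sequentially)
  have "norm (integral {0..t} (\<lambda>s. f s (?p n s)) - integral {0..t} (\<lambda>s. f s (?Y s))) < e"
    if "n \<ge> n0" for n
  proof -
    have cont: "continuous_on {0..t} (\<lambda>s. f s (?p n s))" "continuous_on {0..t} (\<lambda>s. f s (?Y s))"
      by (intro continuous_on_compose_rhs continuous_on_picard_iterate continuous_on_picard_limit t)+
    have "integral {0..t} (\<lambda>s. f s (?p n s)) - integral {0..t} (\<lambda>s. f s (?Y s))
        = integral {0..t} (\<lambda>s. f s (?p n s) - f s (?Y s))"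
      by (rule integral_diff[symmetric]) (intro integrable_continuous_interval cont)+
    also have "norm \<dots> \<le> (L * e') * (t - 0)"
    proof (rule integral_bound)
      fix s assume "s \<in> {0..t}"
      have "norm (f s (?p n s) - f s (?Y s)) \<le> L * norm (?p n s - ?Y s)" by (rule f_lipschitz)
      also have "\<dots> \<le> L * e'"
        using n0[OF that] \<open>s \<in> {0..t}\<close> L_pos by (auto simp: dist_norm intro!: mult_left_mono less_imp_le)
      finally show "norm (f s (?p n s) - f s (?Y s)) \<le> L * e'" .
    qed (use t cont in \<open>auto intro: continuous_on_diff\<close>)
    also have "\<dots> = e * (t / (t + 1))" using L_pos t by (simp add: e'_def)
    also have "\<dots> < e" using mult_strict_left_mono[of "t / (t + 1)" 1 e] \<open>e > 0\<close> t by simp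
    finally show ?thesis .
  qed
  then show "\<exists>n0. \<forall>n\<ge>n0. norm (integral {0..t} (\<lambda>s. f s (?p n s)) - integral {0..t} (\<lambda>s. f s (?Y s))) < e"
    by blast
qed

lemma picard_limit_integral_equation:
  assumes t: "t \<ge> 0"
  shows "picard_limit f x0 t = x0 + integral {0..t} (\<lambda>s. f s (picard_limit f x0 s))"
proof (rule LIMSEQ_unique)
  show "(\<lambda>n. picard_iterate f x0 (Suc n) t) \<longlonglongrightarrow> picard_limit f x0 t"
    using LIMSEQ_Suc[OF tendsto_uniform_limitI[OF picard_iterate_uniform_limit[OF t], of t]] t by simp
  show "(\<lambda>n. picard_iterate f x0 (Suc n) t) \<longlonglongrightarrow> x0 + integral {0..t} (\<lambda>s. f s (picard_limit f x0 s))"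
    using integral_picard_iterate_tendsto[OF t] by (simp add: tendsto_add)
qed

lemma picard_limit_solves:
  assumes t: "t \<ge> 0"
  shows "(picard_limit f x0 has_vector_derivative f t (picard_limit f x0 t)) (at t within {0..})"
proof -
  let ?Y = "picard_limit f x0"
  have t_in: "t \<in> {0..t + 1}" using t by simp
  have "((\<lambda>u. x0 + integral {0..u} (\<lambda>s. f s (?Y s))) has_vector_derivative f t (?Y t)) (at t within {0..t + 1})"
    using integral_has_vector_derivative[OF continuous_on_compose_rhs[OF continuous_on_picard_limit] t_in] t
    by (intro derivative_eq_intros) auto
  then have "(?Y has_vector_derivative f t (?Y t)) (at t within {0..t + 1})"
    by (rule has_vector_derivative_transform[OF t_in, rotated])
      (metis atLeastAtMost_iff picard_limit_integral_equation)
  moreover have "at t within {0..t + 1} = at t within {0..}"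
    by (rule at_within_nhd[of _ "{..<t + 1}"]) auto
  ultimately show ?thesis by simp
qed

end

lemma ode_global_existence:
  fixes f :: "real \<Rightarrow> 'a::euclidean_space \<Rightarrow> 'a"
  assumes "continuous_on UNIV (\<lambda>(t, x). f t x)"
    and "\<And>t x y. norm (f t x - f t y) \<le> L * norm (x - y)" and "L \<ge> 0"
    and "\<And>t x. norm (f t x) \<le> B"
  obtains Y where "Y 0 = x0" "\<And>t. t \<ge> 0 \<Longrightarrow> (Y has_vector_derivative f t (Y t)) (at t within {0..})"
proof
  have lip: "norm (f t x - f t y) \<le> (L + 1) * norm (x - y)" for t x y
    using assms(2)[of t x y] by (simp add: distrib_right add_increasing2)
  have "picard_iterate f x0 k 0 = x0" for k by (cases k) auto
  then show "picard_limit f x0 0 = x0" by (simp add: picard_limit_def)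
  show "(picard_limit f x0 has_vector_derivative f t (picard_limit f x0 t)) (at t within {0..})" if "t \<ge> 0" for t
    by (rule picard_limit_solves[OF assms(1) lip _ assms(4) that]) (use \<open>L \<ge> 0\<close> in simp)
qed

lemma ode_solution_unique:
  fixes X Y :: "real \<Rightarrow> 'a::real_inner"
  assumes t: "t \<ge> 0" and init: "X 0 = Y 0"
    and X_deriv: "\<And>s. s \<in> {0..t} \<Longrightarrow> (X has_vector_derivative f s (X s)) (at s within {0..t})"
    and Y_deriv: "\<And>s. s \<in> {0..t} \<Longrightarrow> (Y has_vector_derivative f s (Y s)) (at s within {0..t})"
    and lipschitz: "\<And>s x y. norm (f s x - f s y) \<le> L * norm (x - y)"
  shows "X t = Y t"
proof -
  define e where "e s = (X s - Y s) \<bullet> (X s - Y s)" for s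
  define e' where "e' s = 2 * ((X s - Y s) \<bullet> (f s (X s) - f s (Y s)))" for s
  \<comment> \<open>Gronwall in differential form: the weighted energy \<open>exp (-2Ls) * |X s - Y s|\<^sup>2\<close> does not increase.\<close>
  have "exp (- (2 * L) * t) * e t \<le> exp (- (2 * L) * 0) * e 0"
  proof (rule real_nonincreasing_of_deriv_nonpos[OF t])
    fix s assume s: "s \<in> {0..t}"
    have dz: "((\<lambda>s. X s - Y s) has_derivative (\<lambda>h. h *\<^sub>R (f s (X s) - f s (Y s)))) (at s within {0..t})"
      using has_vector_derivative_diff[OF X_deriv[OF s] Y_deriv[OF s]] by (simp add: has_vector_derivative_def)
    have "(e has_derivative (\<lambda>h. (X s - Y s) \<bullet> (h *\<^sub>R (f s (X s) - f s (Y s)))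
        + (h *\<^sub>R (f s (X s) - f s (Y s))) \<bullet> (X s - Y s))) (at s within {0..t})"
      unfolding e_def[abs_def] by (rule has_derivative_inner[OF dz dz])
    moreover have "(\<lambda>h. (X s - Y s) \<bullet> (h *\<^sub>R (f s (X s) - f s (Y s)))
        + (h *\<^sub>R (f s (X s) - f s (Y s))) \<bullet> (X s - Y s)) = (*) (e' s)"
      by (rule ext, subst inner_commute[of "_ *\<^sub>R _"]) (simp add: e'_def algebra_simps)
    ultimately have de: "(e has_real_derivative e' s) (at s within {0..t})"
      by (simp add: has_field_derivative_def)
    have "((\<lambda>s. exp (- (2 * L) * s)) has_real_derivative exp (- (2 * L) * s) * (- (2 * L) * 1))
        (at s within {0..t})"
      using has_field_derivative_at_within[OF DERIV_fun_exp[OF DERIV_cmult[OF DERIV_ident, of "- (2 * L)"]]] .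
    from DERIV_mult'[OF this de]
    show "((\<lambda>s. exp (- (2 * L) * s) * e s) has_real_derivative
        - (2 * L) * exp (- (2 * L) * s) * e s + exp (- (2 * L) * s) * e' s) (at s within {0..t})"
      by (simp add: algebra_simps)
    have "(X s - Y s) \<bullet> (f s (X s) - f s (Y s)) \<le> norm (X s - Y s) * norm (f s (X s) - f s (Y s))"
      by (rule norm_cauchy_schwarz)
    also have "\<dots> \<le> norm (X s - Y s) * (L * norm (X s - Y s))" by (intro mult_left_mono lipschitz) auto
    also have "\<dots> = L * e s" by (simp add: e_def power2_norm_eq_inner[symmetric] power2_eq_square)
    finally have "e' s \<le> 2 * L * e s" by (simp add: e'_def)
    then have "exp (- (2 * L) * s) * e' s \<le> exp (- (2 * L) * s) * (2 * L * e s)" by simp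
    then show "- (2 * L) * exp (- (2 * L) * s) * e s + exp (- (2 * L) * s) * e' s \<le> 0"
      by (simp add: algebra_simps)
  qed
  then have "e t \<le> 0" using init by (simp add: e_def zero_le_mult_iff mult_le_0_iff)
  then have "e t = 0" unfolding e_def by (meson inner_ge_zero order_antisym)
  then show ?thesis by (simp add: e_def)
qed

lemma has_vector_derivative_affine: "((\<lambda>s. a + s / c) has_vector_derivative 1 / c) (at s within S)"
proof -
  have "((\<lambda>s. a + (1 / c) *\<^sub>R s) has_vector_derivative 0 + (1 / c) *\<^sub>R 1) (at s within S)"
    by (intro has_vector_derivative_add has_vector_derivative_const
        bounded_linear.has_vector_derivative[OF bounded_linear_scaleR_right] has_vector_derivative_id)
  then show ?thesis by simp
qed

section \<open>Primitives of the dither signals\<close>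

definition trig_period :: "real \<Rightarrow> real \<Rightarrow> bool" where
  "trig_period l T \<longleftrightarrow> (\<exists>m::int. l * T = 2 * pi * of_int m)"

lemma
  assumes "trig_period l T" "trig_period l' T"
  shows trig_period_add: "trig_period (l + l') T"
    and trig_period_diff: "trig_period (l - l') T"
proof -
  obtain m m' :: int where "l * T = 2 * pi * of_int m" "l' * T = 2 * pi * of_int m'"
    using assms unfolding trig_period_def by blast
  then have "(l + l') * T = 2 * pi * of_int (m + m')" "(l - l') * T = 2 * pi * of_int (m - m')"
    by (simp_all add: algebra_simps)
  then show "trig_period (l + l') T" "trig_period (l - l') T"
    unfolding trig_period_def by blast+
qed

lemma
  assumes "trig_period l T"
  shows sin_trig_period: "sin (C + l * (\<theta> + T)) = sin (C + l * \<theta>)"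
    and cos_trig_period: "cos (C + l * (\<theta> + T)) = cos (C + l * \<theta>)"
proof -
  obtain m :: int where "l * T = 2 * pi * of_int m" using assms by (auto simp: trig_period_def)
  then have shift: "C + l * (\<theta> + T) = (C + l * \<theta>) + 2 * pi * of_int m" by (simp add: algebra_simps)
  show "sin (C + l * (\<theta> + T)) = sin (C + l * \<theta>)"
    unfolding shift sin_add[of "C + l * \<theta>"] by simp
  show "cos (C + l * (\<theta> + T)) = cos (C + l * \<theta>)"
    unfolding shift cos_add[of "C + l * \<theta>"] by simp
qed

definition sin_primitive :: "real \<Rightarrow> real \<Rightarrow> real \<Rightarrow> real" where
  "sin_primitive l C \<theta> = (if l = 0 then \<theta> * sin C else - cos (C + l * \<theta>) / l)"

definition cos_primitive :: "real \<Rightarrow> real \<Rightarrow> real \<Rightarrow> real" where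
  "cos_primitive l C \<theta> = (if l = 0 then \<theta> * cos C else sin (C + l * \<theta>) / l)"

lemma has_real_derivative_sin_primitive: "(sin_primitive l C has_real_derivative sin (C + l * \<theta>)) (at \<theta>)"
  unfolding sin_primitive_def by (cases "l = 0") (auto intro!: derivative_eq_intros)

lemma has_real_derivative_cos_primitive: "(cos_primitive l C has_real_derivative cos (C + l * \<theta>)) (at \<theta>)"
  unfolding cos_primitive_def by (cases "l = 0") (auto intro!: derivative_eq_intros)

lemma sin_primitive_period_increment:
  assumes "trig_period l T"
  shows "sin_primitive l C (\<theta> + T) - sin_primitive l C \<theta> = (if l = 0 then T * sin C else 0)"
proof (cases "l = 0")
  case False
  then show ?thesis using cos_trig_period[OF assms, of C \<theta>] by (simp add: sin_primitive_def)
qed (simp add: sin_primitive_def algebra_simps)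

lemma cos_primitive_period_increment:
  assumes "trig_period l T"
  shows "cos_primitive l C (\<theta> + T) - cos_primitive l C \<theta> = (if l = 0 then T * cos C else 0)"
proof (cases "l = 0")
  case False
  then show ?thesis using sin_trig_period[OF assms, of C \<theta>] by (simp add: cos_primitive_def)
qed (simp add: cos_primitive_def algebra_simps)

lemma sqrt_two_div_mult:
  assumes "\<omega> > 0"
  shows "sqrt (2 / \<omega>) * \<omega> = sqrt (2 * \<omega>)"
proof -
  have "sqrt (2 / \<omega>) * \<omega> = sqrt (2 / \<omega> * \<omega>\<^sup>2)"
    using assms by (simp only: real_sqrt_mult real_sqrt_abs abs_of_pos)
  also have "2 / \<omega> * \<omega>\<^sup>2 = 2 * \<omega>" using assms by (simp add: power2_eq_square)
  finally show ?thesis .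
qed

lemma product_to_sum_sin_cos:
  fixes x y a b p q :: real
  shows "2 * ((- sin x * a + cos x * b) * (sin y * p - cos y * q)) =
    - (a * p + b * q) * cos (x - y) + (a * p - b * q) * cos (x + y)
    + (a * q + b * p) * sin (x + y) + (a * q - b * p) * sin (x - y)"
  by (simp add: cos_diff cos_add sin_add sin_diff algebra_simps)

lemma dither_product_eq:
  assumes "\<omega> > 0" "\<nu> > 0"
  shows "(- sqrt (2 * \<omega>) * sin (c + \<omega> * \<theta>) * a + sqrt (2 * \<omega>) * cos (c + \<omega> * \<theta>) * b)
      * (sqrt (2 / \<nu>) * (sin (c + \<nu> * \<theta>) * p - cos (c + \<nu> * \<theta>) * q))
    = sqrt (\<omega> / \<nu>) * (- (a * p + b * q) * cos (0 + (\<omega> - \<nu>) * \<theta>) + (a * p - b * q) * cos (2 * c + (\<omega> + \<nu>) * \<theta>)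
      + (a * q + b * p) * sin (2 * c + (\<omega> + \<nu>) * \<theta>) + (a * q - b * p) * sin (0 + (\<omega> - \<nu>) * \<theta>))"
proof -
  have "sqrt (2 * \<omega>) * sqrt (2 / \<nu>) = sqrt (2 ^ 2 * (\<omega> / \<nu>))"
    by (simp add: real_sqrt_mult[symmetric] power2_eq_square)
  then have sqrt_eq: "sqrt (2 * \<omega>) * sqrt (2 / \<nu>) = 2 * sqrt (\<omega> / \<nu>)"
    by (simp only: real_sqrt_mult real_sqrt_abs)
  have angles: "0 + (\<omega> - \<nu>) * \<theta> = (c + \<omega> * \<theta>) - (c + \<nu> * \<theta>)"
    "2 * c + (\<omega> + \<nu>) * \<theta> = (c + \<omega> * \<theta>) + (c + \<nu> * \<theta>)"
    by (simp_all add: algebra_simps)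
  have "(- sqrt (2 * \<omega>) * sin (c + \<omega> * \<theta>) * a + sqrt (2 * \<omega>) * cos (c + \<omega> * \<theta>) * b)
      * (sqrt (2 / \<nu>) * (sin (c + \<nu> * \<theta>) * p - cos (c + \<nu> * \<theta>) * q))
    = (sqrt (2 * \<omega>) * sqrt (2 / \<nu>)) * ((- sin (c + \<omega> * \<theta>) * a + cos (c + \<omega> * \<theta>) * b)
      * (sin (c + \<nu> * \<theta>) * p - cos (c + \<nu> * \<theta>) * q))"
    by (simp add: algebra_simps)
  also have "\<dots> = sqrt (\<omega> / \<nu>) * (2 * ((- sin (c + \<omega> * \<theta>) * a + cos (c + \<omega> * \<theta>) * b)
      * (sin (c + \<nu> * \<theta>) * p - cos (c + \<nu> * \<theta>) * q)))"
    unfolding sqrt_eq by (simp add: algebra_simps)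
  finally show ?thesis by (simp only: product_to_sum_sin_cos angles)
qed

lemma dither_product_primitive:
  assumes \<omega>: "\<omega> > 0" and \<nu>: "\<nu> > 0" and periods: "trig_period \<omega> T" "trig_period \<nu> T"
  shows "\<exists>F. (\<forall>\<theta>. (F has_real_derivative
        (- sqrt (2 * \<omega>) * sin (c + \<omega> * \<theta>) * a + sqrt (2 * \<omega>) * cos (c + \<omega> * \<theta>) * b)
        * (sqrt (2 / \<nu>) * (sin (c + \<nu> * \<theta>) * p - cos (c + \<nu> * \<theta>) * q))) (at \<theta>))
    \<and> (\<forall>\<theta>. F (\<theta> + T) - F \<theta> = (if \<omega> = \<nu> then - T * (a * p + b * q) else 0))"
proof (intro exI conjI allI)
  define F where "F \<theta> = sqrt (\<omega> / \<nu>) * (- (a * p + b * q) * cos_primitive (\<omega> - \<nu>) 0 \<theta>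
      + (a * p - b * q) * cos_primitive (\<omega> + \<nu>) (2 * c) \<theta>
      + (a * q + b * p) * sin_primitive (\<omega> + \<nu>) (2 * c) \<theta> + (a * q - b * p) * sin_primitive (\<omega> - \<nu>) 0 \<theta>)" for \<theta>
  show "(F has_real_derivative
        (- sqrt (2 * \<omega>) * sin (c + \<omega> * \<theta>) * a + sqrt (2 * \<omega>) * cos (c + \<omega> * \<theta>) * b)
        * (sqrt (2 / \<nu>) * (sin (c + \<nu> * \<theta>) * p - cos (c + \<nu> * \<theta>) * q))) (at \<theta>)" for \<theta>
    unfolding dither_product_eq[OF \<omega> \<nu>] F_def[abs_def]
    by (intro DERIV_cmult DERIV_add has_real_derivative_cos_primitive has_real_derivative_sin_primitive)
  note diff = trig_period_diff[OF periods] and sum = trig_period_add[OF periods]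
  fix \<theta>
  have "F (\<theta> + T) - F \<theta> = sqrt (\<omega> / \<nu>) *
      (- (a * p + b * q) * (cos_primitive (\<omega> - \<nu>) 0 (\<theta> + T) - cos_primitive (\<omega> - \<nu>) 0 \<theta>)
      + (a * p - b * q) * (cos_primitive (\<omega> + \<nu>) (2 * c) (\<theta> + T) - cos_primitive (\<omega> + \<nu>) (2 * c) \<theta>)
      + (a * q + b * p) * (sin_primitive (\<omega> + \<nu>) (2 * c) (\<theta> + T) - sin_primitive (\<omega> + \<nu>) (2 * c) \<theta>)
      + (a * q - b * p) * (sin_primitive (\<omega> - \<nu>) 0 (\<theta> + T) - sin_primitive (\<omega> - \<nu>) 0 \<theta>))"
    unfolding F_def by (simp add: algebra_simps)
  also have "\<dots> = (if \<omega> = \<nu> then - T * (a * p + b * q) else 0)"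
    unfolding cos_primitive_period_increment[OF diff] cos_primitive_period_increment[OF sum]
      sin_primitive_period_increment[OF diff] sin_primitive_period_increment[OF sum]
    using \<omega> \<nu> by (auto simp: algebra_simps)
  finally show "F (\<theta> + T) - F \<theta> = (if \<omega> = \<nu> then - T * (a * p + b * q) else 0)" .
qed

lemma dither_derivative_primitive:
  assumes \<omega>: "\<omega> > 0" and period: "trig_period \<omega> T"
  shows "\<exists>F. (\<forall>\<theta>. (F has_real_derivative
        - sqrt (2 * \<omega>) * sin (c + \<omega> * \<theta>) * a + sqrt (2 * \<omega>) * cos (c + \<omega> * \<theta>) * b) (at \<theta>))
    \<and> (\<forall>\<theta>. F (\<theta> + T) = F \<theta>)"
proof (intro exI conjI allI)
  define F where "F \<theta> = sqrt (2 / \<omega>) * (cos (c + \<omega> * \<theta>) * a + sin (c + \<omega> * \<theta>) * b)" for \<theta>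
  show "(F has_real_derivative
      - sqrt (2 * \<omega>) * sin (c + \<omega> * \<theta>) * a + sqrt (2 * \<omega>) * cos (c + \<omega> * \<theta>) * b) (at \<theta>)" for \<theta>
    unfolding F_def[abs_def] sqrt_two_div_mult[OF \<omega>, symmetric]
    by (rule derivative_eq_intros refl)+ (simp add: algebra_simps)
  show "F (\<theta> + T) = F \<theta>" for \<theta>
    unfolding F_def by (simp only: sin_trig_period[OF period] cos_trig_period[OF period])
qed

definition dither_dy :: "(nat \<Rightarrow> real) \<Rightarrow> nat \<Rightarrow> nat \<Rightarrow> real \<Rightarrow> real \<Rightarrow> real" where
  "dither_dy \<omega> i j y \<tau> =
     (if j = 1 then - sqrt (2 * \<omega> i) * sin (y + \<omega> i * \<tau>)
      else sqrt (2 * \<omega> i) * cos (y + \<omega> i * \<tau>))"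

lemma has_real_derivative_dither: "((\<lambda>y. dither \<omega> i j y \<tau>) has_real_derivative dither_dy \<omega> i j y \<tau>) (at y)"
  unfolding dither_def dither_dy_def by (auto intro!: derivative_eq_intros)

lemma has_real_derivative_dither_dy: "((\<lambda>y. dither_dy \<omega> i j y \<tau>) has_real_derivative
   (if j = 1 then - sqrt (2 * \<omega> i) * cos (y + \<omega> i * \<tau>) else - sqrt (2 * \<omega> i) * sin (y + \<omega> i * \<tau>))) (at y)"
  unfolding dither_dy_def by (auto intro!: derivative_eq_intros)

lemma abs_dither_le: "\<omega> i \<ge> 0 \<Longrightarrow> \<bar>dither \<omega> i j y \<tau>\<bar> \<le> sqrt (2 * \<omega> i)"
  unfolding dither_def by (auto simp: abs_mult intro!: mult_left_le)

lemma abs_dither_dy_le: "\<omega> i \<ge> 0 \<Longrightarrow> \<bar>dither_dy \<omega> i j y \<tau>\<bar> \<le> sqrt (2 * \<omega> i)"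
  unfolding dither_dy_def by (auto simp: abs_mult intro!: mult_left_le)

lemma dither_lipschitz:
  "\<omega> i \<ge> 0 \<Longrightarrow> \<bar>dither \<omega> i j y \<tau> - dither \<omega> i j y' \<tau>\<bar> \<le> sqrt (2 * \<omega> i) * \<bar>y - y'\<bar>"
  by (rule abs_diff_le_of_deriv_bound[OF has_real_derivative_dither abs_dither_dy_le])

lemma dither_taylor:
  "\<omega> i \<ge> 0 \<Longrightarrow> \<bar>dither \<omega> i j y \<tau> - dither \<omega> i j y0 \<tau> - dither_dy \<omega> i j y0 \<tau> * (y - y0)\<bar>
    \<le> sqrt (2 * \<omega> i) * (y - y0)\<^sup>2"
  by (rule abs_taylor_le_of_second_deriv_bound[OF has_real_derivative_dither has_real_derivative_dither_dy])
    (auto simp: abs_mult intro!: mult_left_le)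

lemma continuous_on_dither:
  fixes S :: "'b::t2_space set"
  assumes "continuous_on S g" "continuous_on S h"
  shows "continuous_on S (\<lambda>s. dither \<omega> i j (g s) (h s))"
proof -
  have arg: "continuous_on S (\<lambda>s. g s + \<omega> i * h s)"
    by (intro continuous_on_add continuous_on_mult continuous_on_const assms)
  have "continuous_on S (\<lambda>s. sqrt (2 * \<omega> i) * cos (g s + \<omega> i * h s))"
    "continuous_on S (\<lambda>s. sqrt (2 * \<omega> i) * sin (g s + \<omega> i * h s))"
    by (intro continuous_on_mult continuous_on_const continuous_on_cos continuous_on_sin arg)+
  then show ?thesis by (cases "j = 1") (simp_all add: dither_def)
qed

section \<open>Comparison functions\<close>

definition class_K_inv :: "(real \<Rightarrow> real) \<Rightarrow> real \<Rightarrow> real" where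
  "class_K_inv f = the_inv_into {0..} f"

context
  fixes f :: "real \<Rightarrow> real"
  assumes K: "class_K f"
begin

lemma class_K_strict: "0 \<le> x \<Longrightarrow> x < x' \<Longrightarrow> f x < f x'"
  using K unfolding class_K_def by (auto intro: strict_mono_onD)

lemma class_K_mono: "0 \<le> x \<Longrightarrow> x \<le> x' \<Longrightarrow> f x \<le> f x'"
  using class_K_strict by (cases "x = x'") (auto intro: less_imp_le)

lemma class_K_zero: "f 0 = 0"
  using K by (simp add: class_K_def)

lemma class_K_nonneg: "0 \<le> x \<Longrightarrow> 0 \<le> f x"
  using class_K_mono[of 0 x] class_K_zero by simp

lemma class_K_less_iff: "0 \<le> x \<Longrightarrow> 0 \<le> x' \<Longrightarrow> f x < f x' \<longleftrightarrow> x < x'"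
  using class_K_strict[of x x'] class_K_mono[of x' x] by (metis linorder_not_le)

lemma class_K_image: "0 \<le> x \<Longrightarrow> 0 \<le> y \<Longrightarrow> y \<le> f x \<Longrightarrow> y \<in> f ` {0..}"
proof -
  assume x: "0 \<le> x" and y: "0 \<le> y" "y \<le> f x"
  have "continuous_on {0..x} f"
    using K unfolding class_K_def by (auto intro: continuous_on_subset)
  then obtain z where "0 \<le> z" "z \<le> x" "f z = y"
    using IVT'[of f 0 y x] y x class_K_zero by auto
  then show ?thesis by auto
qed

lemma inj_on_class_K: "inj_on f {0..}"
  using K unfolding class_K_def using strict_mono_on_imp_inj_on by blast

lemma class_K_inv_apply: "x \<ge> 0 \<Longrightarrow> class_K_inv f (f x) = x"
  unfolding class_K_inv_def by (rule the_inv_into_f_f[OF inj_on_class_K]) auto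

lemma class_K_apply_inv: "y \<in> f ` {0..} \<Longrightarrow> f (class_K_inv f y) = y"
  unfolding class_K_inv_def by (rule f_the_inv_into_f[OF inj_on_class_K])

lemma class_K_inv_nonneg: "y \<in> f ` {0..} \<Longrightarrow> class_K_inv f y \<ge> 0"
  using the_inv_into_into[OF inj_on_class_K, of y "{0..}"] by (auto simp: class_K_inv_def)

lemma class_K_inv_zero: "class_K_inv f 0 = 0"
  using class_K_inv_apply[of 0] class_K_zero by simp

lemma class_K_inv_less_iff:
  "y \<in> f ` {0..} \<Longrightarrow> y' \<in> f ` {0..} \<Longrightarrow> class_K_inv f y < class_K_inv f y' \<longleftrightarrow> y < y'"
  by (auto simp: class_K_inv_apply class_K_less_iff)

lemma class_K_inv_mono:
  "y \<in> f ` {0..} \<Longrightarrow> y' \<in> f ` {0..} \<Longrightarrow> y \<le> y' \<Longrightarrow> class_K_inv f y \<le> class_K_inv f y'"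
  using class_K_inv_less_iff[of y' y] by linarith

lemma continuous_on_class_K_inv: "continuous_on (f ` {0..}) (class_K_inv f)"
  unfolding continuous_on_eq_continuous_within
proof clarsimp
  fix x0 :: real assume x0: "x0 \<ge> 0"
  \<comment> \<open>continuity of the inverse on the compact image \<open>f ` {0..x0 + 1}\<close>, which is a neighbourhood of \<open>f x0\<close> in the image\<close>
  have "continuous_on (f ` {0..x0 + 1}) (class_K_inv f)"
    unfolding class_K_inv_def
    by (rule continuous_on_inv)
      (use K in \<open>auto simp: class_K_def class_K_inv_apply[unfolded class_K_inv_def] intro: continuous_on_subset\<close>)
  then have "continuous (at (f x0) within f ` {0..x0 + 1}) (class_K_inv f)"
    using x0 by (auto simp: continuous_on_eq_continuous_within)
  moreover have "at (f x0) within f ` {0..} = at (f x0) within f ` {0..x0 + 1}"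
  proof (rule at_within_nhd[of _ "{..<f (x0 + 1)}"])
    show "f x0 \<in> {..<f (x0 + 1)}" using class_K_strict[OF x0, of "x0 + 1"] by simp
    show "f ` {0..} \<inter> {..<f (x0 + 1)} - {f x0} = f ` {0..x0 + 1} \<inter> {..<f (x0 + 1)} - {f x0}"
      using class_K_less_iff x0 by force
  qed simp
  ultimately show "continuous (at (f x0) within f ` {0..}) (class_K_inv f)" by simp
qed

lemma class_K_inv_class_K:
  assumes "f ` {0..} = {0..}"
  shows "class_K (class_K_inv f)"
  unfolding class_K_def
proof (intro conjI)
  show "continuous_on {0..} (class_K_inv f)" using continuous_on_class_K_inv assms by simp
  show "class_K_inv f 0 = 0" by (rule class_K_inv_zero)
  show "strict_mono_on {0..} (class_K_inv f)"
    by (rule strict_mono_onI) (use class_K_inv_less_iff assms in auto)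
qed

end

lemma continuous_on_class_K: "class_K f \<Longrightarrow> continuous_on {0..} f"
  by (simp add: class_K_def)

lemma class_K_small_values:
  assumes "class_K G" "\<nu> > 0"
  obtains d where "d > 0" "\<And>z. 0 \<le> z \<Longrightarrow> z \<le> d \<Longrightarrow> G z \<le> \<nu>"
proof -
  obtain d0 where d0: "d0 > 0" "\<And>z. z \<in> {0..} \<Longrightarrow> dist z 0 < d0 \<Longrightarrow> dist (G z) (G 0) < \<nu>"
    using continuous_on_class_K[OF assms(1)] assms(2) unfolding continuous_on_iff
    by (metis atLeast_iff order_refl)
  show ?thesis
  proof
    show "d0 / 2 > 0" using d0 by simp
    fix z :: real assume "0 \<le> z" "z \<le> d0 / 2"
    then have "dist (G z) (G 0) < \<nu>" using d0 by (intro d0(2)) (auto simp: dist_real_def)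
    then show "G z \<le> \<nu>" using class_K_zero[OF assms(1)] by (simp add: dist_real_def)
  qed
qed

text \<open>The value of \<open>\<rho>\<close> at the level reached by time \<open>t\<close> in the sampled comparison argument below:
  \<open>min (\<rho> v) (4 v / t)\<close>, written as a quotient so that it is defined, and continuous, at \<open>t = 0\<close>.\<close>
definition decay_level :: "(real \<Rightarrow> real) \<Rightarrow> real \<Rightarrow> real \<Rightarrow> real" where
  "decay_level \<rho> v t = 4 * v * \<rho> v / max (4 * v) (t * \<rho> v)"

lemma decay_level_of_0 [simp]: "decay_level \<rho> 0 t = 0"
  unfolding decay_level_def by simp

context
  fixes \<rho> :: "real \<Rightarrow> real"
  assumes K: "class_K \<rho>"
begin

lemma decay_level_eq_rate: "v \<ge> 0 \<Longrightarrow> t * \<rho> v \<le> 4 * v \<Longrightarrow> decay_level \<rho> v t = \<rho> v"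
  using class_K_zero[OF K] unfolding decay_level_def by (cases "v = 0") (auto simp: max_def)

lemma decay_level_eq_div: "v \<ge> 0 \<Longrightarrow> t * \<rho> v > 4 * v \<Longrightarrow> decay_level \<rho> v t = 4 * v / t"
  unfolding decay_level_def by (auto simp: max_def)

lemma decay_level_at_0: "v \<ge> 0 \<Longrightarrow> decay_level \<rho> v 0 = \<rho> v"
  by (rule decay_level_eq_rate) auto

lemma decay_level_eq_min:
  assumes "v \<ge> 0" "t > 0"
  shows "decay_level \<rho> v t = min (\<rho> v) (4 * v / t)"
proof (cases "t * \<rho> v \<le> 4 * v")
  case True
  then have "\<rho> v \<le> 4 * v / t" using assms by (simp add: le_divide_eq mult.commute)
  then show ?thesis using decay_level_eq_rate[OF assms(1) True] by simp
next
  case False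
  then have "4 * v / t < \<rho> v" using assms by (simp add: divide_less_eq mult.commute)
  then show ?thesis using decay_level_eq_div[OF assms(1)] False by simp
qed

lemma decay_level_bounds:
  assumes "v \<ge> 0" "t \<ge> 0"
  shows "0 \<le> decay_level \<rho> v t" "decay_level \<rho> v t \<le> \<rho> v"
proof -
  have "\<rho> v \<ge> 0" by (rule class_K_nonneg[OF K assms(1)])
  then show "0 \<le> decay_level \<rho> v t" "decay_level \<rho> v t \<le> \<rho> v"
    using assms decay_level_at_0 decay_level_eq_min[of v t] by (cases "t = 0"; simp)+
qed

lemma decay_level_strict_mono:
  assumes "t \<ge> 0" "0 \<le> v" "v < v'"
  shows "decay_level \<rho> v t < decay_level \<rho> v' t"
proof (cases "t = 0")
  case False
  then have "4 * v / t < 4 * v' / t" using assms by (simp add: divide_strict_right_mono)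
  then show ?thesis
    using decay_level_eq_min[of _ t] class_K_strict[OF K assms(2,3)] assms False by (simp add: min_def)
qed (use decay_level_at_0 class_K_strict[OF K assms(2,3)] assms in simp)

lemma decay_level_antimono:
  assumes "v \<ge> 0" "0 \<le> t" "t \<le> t'"
  shows "decay_level \<rho> v t' \<le> decay_level \<rho> v t"
proof (cases "t = 0")
  case False
  then have "4 * v / t' \<le> 4 * v / t" using assms by (intro divide_left_mono) auto
  then show ?thesis using decay_level_eq_min[of v] assms False by (simp add: min_def)
qed (use decay_level_at_0 decay_level_bounds(2) assms in simp)

lemma decay_level_tendsto_0:
  assumes "v \<ge> 0"
  shows "(decay_level \<rho> v \<longlongrightarrow> 0) at_top"
proof (rule tendsto_sandwich[OF _ _ tendsto_const])
  show "eventually (\<lambda>t. 0 \<le> decay_level \<rho> v t) at_top"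
    using decay_level_bounds(1)[OF assms] by (auto simp: eventually_at_top_linorder)
  show "eventually (\<lambda>t. decay_level \<rho> v t \<le> 4 * v / t) at_top"
    using decay_level_eq_min[OF assms] by (auto simp: eventually_at_top_linorder intro!: exI[of _ 1])
  show "((\<lambda>t. 4 * v / t) \<longlongrightarrow> 0) at_top"
    by (rule tendsto_divide_0[OF tendsto_const filterlim_at_top_imp_at_infinity[OF filterlim_ident]])
qed

lemma continuous_on_decay_level:
  "continuous_on ({0..} \<times> {0..}) (\<lambda>p. decay_level \<rho> (fst p) (snd p))"
  unfolding continuous_on_def
proof clarsimp
  fix v0 t0 :: real assume v0: "v0 \<ge> 0" and t0: "t0 \<ge> 0"
  let ?S = "{0::real..} \<times> {0::real..}"
  have "continuous_on ?S (\<lambda>p. \<rho> (fst p))"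
    by (rule continuous_on_compose2[OF continuous_on_class_K[OF K]]) (auto intro: continuous_intros)
  then have \<rho>_lim: "((\<lambda>p. \<rho> (fst p)) \<longlongrightarrow> \<rho> v0) (at (v0, t0) within ?S)"
    using v0 t0 unfolding continuous_on_def by auto
  show "((\<lambda>p. decay_level \<rho> (fst p) (snd p)) \<longlongrightarrow> decay_level \<rho> v0 t0) (at (v0, t0) within ?S)"
  proof (cases "v0 = 0")
    case True
    then have "decay_level \<rho> v0 t0 = 0" by simp
    \<comment> \<open>at \<open>v0 = 0\<close> the quotient is squeezed between \<open>0\<close> and \<open>\<rho> v\<close>\<close>
    show ?thesis unfolding \<open>decay_level \<rho> v0 t0 = 0\<close>
    proof (rule tendsto_sandwich[OF _ _ tendsto_const])
      show "eventually (\<lambda>p. 0 \<le> decay_level \<rho> (fst p) (snd p)) (at (v0, t0) within ?S)"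
        unfolding eventually_at_filter by (rule always_eventually) (auto intro: decay_level_bounds(1))
      show "eventually (\<lambda>p. decay_level \<rho> (fst p) (snd p) \<le> \<rho> (fst p)) (at (v0, t0) within ?S)"
        unfolding eventually_at_filter by (rule always_eventually) (auto intro: decay_level_bounds(2))
      show "((\<lambda>p. \<rho> (fst p)) \<longlongrightarrow> 0) (at (v0, t0) within ?S)"
        using \<rho>_lim True class_K_zero[OF K] by simp
    qed
  next
    case False
    then have "max (4 * v0) (t0 * \<rho> v0) \<noteq> 0" using v0 by (auto simp: max_def)
    moreover have "(fst \<longlongrightarrow> v0) (at (v0, t0) within ?S)" "(snd \<longlongrightarrow> t0) (at (v0, t0) within ?S)"
      using tendsto_fst[OF tendsto_ident_at] tendsto_snd[OF tendsto_ident_at] by fastforce+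
    ultimately show ?thesis unfolding decay_level_def by (intro tendsto_intros \<rho>_lim)
  qed
qed

lemma decay_level_image: "v \<ge> 0 \<Longrightarrow> t \<ge> 0 \<Longrightarrow> decay_level \<rho> v t \<in> \<rho> ` {0..}"
  using class_K_image[OF K] decay_level_bounds by blast

text \<open>Decreasing at rate \<open>\<rho> lvl / 2\<close> from time \<open>P\<close> on exhausts \<open>v0\<close> by time \<open>t\<close>, unless \<open>v0\<close> is already
  below \<open>lvl\<close> or \<open>t < 2 P\<close>; in the last case \<open>v0\<close> itself is at most \<open>P \<rho>max / 2\<close>.\<close>
lemma decay_level_reached:
  assumes "v0 \<ge> 0" "t \<ge> 0" "P > 0" and \<rho>_le: "\<And>x. x \<ge> 0 \<Longrightarrow> \<rho> x \<le> \<rho>max"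
    and lvl: "lvl \<ge> class_K_inv \<rho> (decay_level \<rho> v0 t)"
  shows "v0 - max 0 (t - P) * \<rho> lvl / 2 \<le> lvl + P * \<rho>max / 2"
proof -
  define y where "y = decay_level \<rho> v0 t"
  have y: "y \<in> \<rho> ` {0..}" unfolding y_def using decay_level_image assms(1,2) .
  have lvl_nonneg: "lvl \<ge> 0" using class_K_inv_nonneg[OF K y] lvl unfolding y_def by linarith
  have "\<rho> lvl \<ge> y"
    using class_K_mono[OF K class_K_inv_nonneg[OF K y] lvl[folded y_def]] class_K_apply_inv[OF K y] by simp
  have decrease_nonneg: "max 0 (t - P) * \<rho> lvl / 2 \<ge> 0" using class_K_nonneg[OF K lvl_nonneg] by simp
  have "P * \<rho>max \<ge> 0" using \<rho>_le[OF assms(1)] class_K_nonneg[OF K assms(1)] assms(3) by simp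
  show ?thesis
  proof (cases "t * \<rho> v0 \<le> 4 * v0")
    case True
    then have "class_K_inv \<rho> y = v0"
      using decay_level_eq_rate class_K_inv_apply[OF K] assms(1) by (simp add: y_def)
    then have "v0 \<le> lvl" using lvl unfolding y_def[symmetric] by simp
    then show ?thesis using decrease_nonneg \<open>P * \<rho>max \<ge> 0\<close> by linarith
  next
    case False
    then have "y = 4 * v0 / t" unfolding y_def using decay_level_eq_div assms(1) by simp
    have "t > 0" using False assms(1,2) by (cases "t = 0") auto
    show ?thesis
    proof (cases "t \<ge> 2 * P")
      case True
      then have "(t / 2) * (4 * v0 / t) / 2 \<le> max 0 (t - P) * \<rho> lvl / 2"
        using \<open>\<rho> lvl \<ge> y\<close> \<open>y = 4 * v0 / t\<close> \<open>t > 0\<close> assms(1)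
        by (intro divide_right_mono mult_mono) auto
      moreover have "(t / 2) * (4 * v0 / t) / 2 = v0" using \<open>t > 0\<close> by simp
      ultimately show ?thesis using lvl_nonneg \<open>P * \<rho>max \<ge> 0\<close> by linarith
    next
      case False
      have "4 * v0 < t * \<rho> v0" using \<open>\<not> t * \<rho> v0 \<le> 4 * v0\<close> by simp
      also have "\<dots> \<le> (2 * P) * \<rho>max"
        using False \<open>t > 0\<close> \<rho>_le[OF assms(1)] class_K_nonneg[OF K assms(1)] by (intro mult_mono) auto
      finally show ?thesis using lvl_nonneg decrease_nonneg by linarith
    qed
  qed
qed

end

context
  fixes v \<rho> :: "real \<Rightarrow> real" and P \<rho>max e1 e2 \<delta> v0 :: real
  assumes P: "P > 0" and K: "class_K \<rho>" and \<rho>_le: "\<And>x. x \<ge> 0 \<Longrightarrow> \<rho> x \<le> \<rho>max"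
    and v_nonneg: "\<And>t. t \<ge> 0 \<Longrightarrow> v t \<ge> 0"
    and sampled_step: "\<And>t. t \<ge> 0 \<Longrightarrow> v (t + P) \<le> v t - P * \<rho> (v t) + P * e1"
    and within_period: "\<And>t0 t. t0 \<ge> 0 \<Longrightarrow> t0 \<le> t \<Longrightarrow> t \<le> t0 + P \<Longrightarrow> v t \<le> v t0 + e2"
    and \<delta>: "\<delta> > 0" "2 * e1 \<le> \<rho> \<delta>" and e1: "e1 \<ge> 0"
    and v0: "v 0 \<le> v0"
begin

lemma sampled_decrease_at_multiples:
  assumes lvl: "lvl \<ge> \<delta>"
  shows "v (real k * P) \<le> max (lvl + P * e1) (v0 - real k * P * \<rho> lvl / 2)"
proof (induction k)
  case (Suc k)
  define vk where "vk = v (real k * P)"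
  have "vk \<ge> 0" unfolding vk_def using v_nonneg P by simp
  have step: "v (real (Suc k) * P) \<le> vk - P * \<rho> vk + P * e1"
    using sampled_step[of "real k * P"] P unfolding vk_def by (simp add: algebra_simps)
  have "\<rho> lvl \<ge> \<rho> \<delta>" using class_K_mono[OF K, of \<delta> lvl] lvl \<delta> by simp
  show ?case
  proof (cases "vk \<le> lvl")
    case True
    then show ?thesis using step class_K_nonneg[OF K \<open>vk \<ge> 0\<close>] P by (smt (verit) mult_nonneg_nonneg)
  next
    case False
    \<comment> \<open>above the level, \<open>\<rho>\<close> dominates twice the perturbation \<open>e1\<close>\<close>
    have "\<rho> vk \<ge> \<rho> lvl" using class_K_mono[OF K, of lvl vk] False lvl \<delta> by simp
    then have "P * e1 \<le> P * (\<rho> vk / 2)" "P * \<rho> lvl \<le> P * \<rho> vk"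
      using \<delta>(2) \<open>\<rho> lvl \<ge> \<rho> \<delta>\<close> P by (intro mult_left_mono; simp)+
    then have "v (real (Suc k) * P) \<le> vk - P * \<rho> lvl / 2" using step by simp
    moreover have "P * \<rho> lvl \<ge> 0" using P class_K_nonneg[OF K, of lvl] lvl \<delta> by simp
    moreover have "real (Suc k) * P * \<rho> lvl / 2 = real k * P * \<rho> lvl / 2 + P * \<rho> lvl / 2"
      by (simp add: algebra_simps)
    ultimately show ?thesis using Suc.IH unfolding vk_def le_max_iff_disj by linarith
  qed
qed (use v0 in simp)

lemma sampled_decrease:
  assumes lvl: "lvl \<ge> \<delta>" and t: "t \<ge> 0"
  shows "v t \<le> max lvl (v0 - max 0 (t - P) * \<rho> lvl / 2) + P * e1 + e2"
proof -
  define k where "k = nat \<lfloor>t / P\<rfloor>"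
  have "real k = of_int \<lfloor>t / P\<rfloor>" unfolding k_def using t P by simp
  then have "real k \<le> t / P" "t / P \<le> real k + 1" by linarith+
  then have kP: "real k * P \<le> t" "t \<le> real k * P + P" using P by (simp_all add: field_simps)
  have "v t \<le> v (real k * P) + e2" using within_period[of "real k * P" t] kP P by simp
  moreover have "max 0 (t - P) * \<rho> lvl / 2 \<le> real k * P * \<rho> lvl / 2"
    using kP P class_K_nonneg[OF K, of lvl] lvl \<delta> by (intro divide_right_mono mult_right_mono) auto
  moreover have "P * e1 \<ge> 0" using e1 P by simp
  ultimately show ?thesis using sampled_decrease_at_multiples[OF lvl, of k] by linarith
qed

theorem sampled_comparison:
  assumes t: "t \<ge> 0"
  shows "v t \<le> max \<delta> (class_K_inv \<rho> (decay_level \<rho> v0 t)) + P * \<rho>max / 2 + P * e1 + e2"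
proof -
  define lvl where "lvl = max \<delta> (class_K_inv \<rho> (decay_level \<rho> v0 t))"
  have "v0 \<ge> 0" using v_nonneg[of 0] v0 by simp
  have "v0 - max 0 (t - P) * \<rho> lvl / 2 \<le> lvl + P * \<rho>max / 2"
    by (rule decay_level_reached[OF K \<open>v0 \<ge> 0\<close> t P \<rho>_le]) (simp_all add: lvl_def)
  moreover have "lvl \<le> lvl + P * \<rho>max / 2" using \<rho>_le[of 0] class_K_nonneg[OF K, of 0] P by simp
  ultimately show ?thesis using sampled_decrease[of lvl, OF _ t] by (simp add: lvl_def)
qed

end

definition comparison_level :: "(real \<Rightarrow> real) \<Rightarrow> real \<Rightarrow> real \<Rightarrow> real \<Rightarrow> real" where
  "comparison_level \<rho> c s t = class_K_inv \<rho> (decay_level \<rho> (c * s) t)"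

context
  fixes \<rho> :: "real \<Rightarrow> real" and c :: real
  assumes K: "class_K \<rho>" and c: "c > 0"
begin

private lemma decay_level_in_image: "s \<ge> 0 \<Longrightarrow> t \<ge> 0 \<Longrightarrow> decay_level \<rho> (c * s) t \<in> \<rho> ` {0..}"
  using decay_level_image[OF K] c by simp

lemma comparison_level_nonneg: "s \<ge> 0 \<Longrightarrow> t \<ge> 0 \<Longrightarrow> comparison_level \<rho> c s t \<ge> 0"
  unfolding comparison_level_def using class_K_inv_nonneg[OF K decay_level_in_image] .

lemma comparison_level_zero: "comparison_level \<rho> c 0 t = 0"
  unfolding comparison_level_def using class_K_inv_zero[OF K] by simp

lemma continuous_on_comparison_level:
  "continuous_on ({0..} \<times> {0..}) (\<lambda>p. comparison_level \<rho> c (fst p) (snd p))"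
proof -
  have "continuous_on ({0..} \<times> {0..}) (\<lambda>p. decay_level \<rho> (c * fst p) (snd p))"
    by (rule continuous_on_compose2[OF continuous_on_decay_level[OF K], of _ "\<lambda>p. (c * fst p, snd p)", simplified])
      (use c in \<open>auto intro!: continuous_intros\<close>)
  then show ?thesis unfolding comparison_level_def
    by (rule continuous_on_compose2[OF continuous_on_class_K_inv[OF K]]) (auto intro: decay_level_in_image)
qed

lemma comparison_level_strict_mono:
  "t \<ge> 0 \<Longrightarrow> 0 \<le> s \<Longrightarrow> s < s' \<Longrightarrow> comparison_level \<rho> c s t < comparison_level \<rho> c s' t"
  unfolding comparison_level_def using decay_level_strict_mono[OF K] class_K_inv_less_iff[OF K] decay_level_in_image c
  by simp

lemma comparison_level_antimono:
  "s \<ge> 0 \<Longrightarrow> 0 \<le> t \<Longrightarrow> t \<le> t' \<Longrightarrow> comparison_level \<rho> c s t' \<le> comparison_level \<rho> c s t"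
  unfolding comparison_level_def using decay_level_antimono[OF K] class_K_inv_mono[OF K] decay_level_in_image c
  by simp

lemma comparison_level_tendsto_0:
  assumes "s \<ge> 0"
  shows "(comparison_level \<rho> c s \<longlongrightarrow> 0) at_top"
proof -
  have "((\<lambda>t. decay_level \<rho> (c * s) t) \<longlongrightarrow> 0) at_top"
    using decay_level_tendsto_0[OF K] assms c by simp
  moreover have "eventually (\<lambda>t. decay_level \<rho> (c * s) t \<in> \<rho> ` {0..}) at_top"
    using decay_level_in_image assms by (auto simp: eventually_at_top_linorder)
  moreover have "0 \<in> \<rho> ` {0..}" using class_K_image[OF K, of 0 0] class_K_zero[OF K] by simp
  ultimately have "((\<lambda>t. class_K_inv \<rho> (decay_level \<rho> (c * s) t)) \<longlongrightarrow> class_K_inv \<rho> 0) at_top"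
    by (intro continuous_on_tendsto_compose[OF continuous_on_class_K_inv[OF K]])
  then show ?thesis unfolding comparison_level_def[abs_def] class_K_inv_zero[OF K] .
qed

lemma class_KL_of_comparison_level:
  assumes G: "class_K G"
  shows "class_KL (\<lambda>s t. G (2 * comparison_level \<rho> c s t))"
  unfolding class_KL_def
proof (intro conjI allI impI ballI)
  show cont: "continuous_on ({0..} \<times> {0..}) (\<lambda>(s, t). G (2 * comparison_level \<rho> c s t))"
    unfolding case_prod_beta
    by (rule continuous_on_compose2[OF continuous_on_class_K[OF G]])
      (use continuous_on_comparison_level comparison_level_nonneg in \<open>auto intro!: continuous_intros\<close>)
  fix t :: real assume t: "t \<ge> 0"
  show "class_K (\<lambda>s. G (2 * comparison_level \<rho> c s t))"
    unfolding class_K_def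
  proof (intro conjI)
    show "continuous_on {0..} (\<lambda>s. G (2 * comparison_level \<rho> c s t))"
      by (rule continuous_on_compose2[OF cont, of _ "\<lambda>s. (s, t)", simplified])
        (use t in \<open>auto intro!: continuous_intros\<close>)
    show "G (2 * comparison_level \<rho> c 0 t) = 0"
      using comparison_level_zero class_K_zero[OF G] by simp
    show "strict_mono_on {0..} (\<lambda>s. G (2 * comparison_level \<rho> c s t))"
      by (rule strict_mono_onI)
        (use class_K_strict[OF G] comparison_level_strict_mono comparison_level_nonneg t in auto)
  qed
next
  fix s :: real assume s: "s \<ge> 0"
  show "antimono_on {0..} (\<lambda>t. G (2 * comparison_level \<rho> c s t))"
    by (rule monotone_onI)
      (use class_K_mono[OF G] comparison_level_antimono comparison_level_nonneg s in auto)
  have "((\<lambda>t. 2 * comparison_level \<rho> c s t) \<longlongrightarrow> 0) at_top"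
    using tendsto_mult_right_zero[OF comparison_level_tendsto_0[OF s]] by simp
  moreover have "eventually (\<lambda>t. 2 * comparison_level \<rho> c s t \<in> {0..}) at_top"
    using comparison_level_nonneg s by (auto simp: eventually_at_top_linorder)
  ultimately have "((\<lambda>t. G (2 * comparison_level \<rho> c s t)) \<longlongrightarrow> G 0) at_top"
    by (intro continuous_on_tendsto_compose[OF continuous_on_class_K[OF G]]) auto
  then show "((\<lambda>t. G (2 * comparison_level \<rho> c s t)) \<longlongrightarrow> 0) at_top" using class_K_zero[OF G] by simp
qed

end

lemma class_K_max_add_le:
  assumes "class_K G" "0 \<le> w" "0 \<le> \<delta>" "0 \<le> \<eta>"
  shows "G (max \<delta> w + \<eta>) \<le> max (G (2 * w)) (G (2 * max \<delta> \<eta>))"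
proof (cases "max \<delta> \<eta> \<le> w")
  case True
  then have "G (max \<delta> w + \<eta>) \<le> G (2 * w)" using assms by (intro class_K_mono[OF assms(1)]) auto
  then show ?thesis by simp
next
  case False
  then have "G (max \<delta> w + \<eta>) \<le> G (2 * max \<delta> \<eta>)" using assms by (intro class_K_mono[OF assms(1)]) auto
  then show ?thesis by simp
qed

section \<open>A class K bound for proper Lipschitz functions\<close>

definition inf_outside_ball :: "('a::real_normed_vector \<Rightarrow> real) \<Rightarrow> real \<Rightarrow> real" where
  "inf_outside_ball V \<rho> = Inf (V ` {x. \<rho> \<le> norm x})"

text \<open>The factor \<open>\<rho> / (1 + \<rho>)\<close> makes the merely nondecreasing \<open>inf_outside_ball V\<close> strictly increasing.\<close>
definition K_lower_bound :: "('a::real_normed_vector \<Rightarrow> real) \<Rightarrow> real \<Rightarrow> real" where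
  "K_lower_bound V \<rho> = inf_outside_ball V \<rho> * (\<rho> / (1 + \<rho>))"

context
  fixes V :: "'a::euclidean_space \<Rightarrow> real" and M :: real
  assumes V_zero: "V 0 = 0" and V_pos: "\<And>x. x \<noteq> 0 \<Longrightarrow> V x > 0"
    and V_lipschitz: "\<And>x y. \<bar>V x - V y\<bar> \<le> M * norm (x - y)"
    and V_proper: "filterlim V at_top at_infinity"
begin

private lemma V_nonneg: "V x \<ge> 0"
  using V_pos[of x] V_zero by (cases "x = 0") auto

private lemma lipschitz_const_nonneg: "M \<ge> 0"
proof -
  obtain e :: 'a where "norm e = 1" using vector_choose_size[of 1] by auto
  then show ?thesis using V_lipschitz[of e 0] V_pos[of e] V_zero by (auto simp: zero_less_abs_iff)
qed

private lemma continuous_on_V: "continuous_on S V"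
proof (rule lipschitz_on_continuous_on[of M], rule lipschitz_onI)
  show "dist (V x) (V y) \<le> M * dist x y" for x y
    using V_lipschitz[of x y] by (simp add: dist_real_def dist_norm)
qed (rule lipschitz_const_nonneg)

private lemma V_eventually_ge: "\<exists>R. \<forall>x. R \<le> norm x \<longrightarrow> B \<le> V x"
  using V_proper unfolding filterlim_at_top eventually_at_infinity by blast

private lemma V_image_nonempty: "\<rho> \<ge> 0 \<Longrightarrow> V ` {x. \<rho> \<le> norm x} \<noteq> {}"
  using vector_choose_size[of \<rho>] by (metis empty_iff image_eqI mem_Collect_eq order_refl)

lemma inf_outside_ball_le: "\<rho> \<le> norm x \<Longrightarrow> inf_outside_ball V \<rho> \<le> V x"
  unfolding inf_outside_ball_def by (rule cInf_lower) (auto intro: bdd_belowI[of _ 0] V_nonneg)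

lemma inf_outside_ball_greatest:
  "\<rho> \<ge> 0 \<Longrightarrow> (\<And>x. \<rho> \<le> norm x \<Longrightarrow> c \<le> V x) \<Longrightarrow> c \<le> inf_outside_ball V \<rho>"
  unfolding inf_outside_ball_def by (rule cInf_greatest[OF V_image_nonempty]) auto

lemma inf_outside_ball_nonneg: "\<rho> \<ge> 0 \<Longrightarrow> inf_outside_ball V \<rho> \<ge> 0"
  by (rule inf_outside_ball_greatest) (auto intro: V_nonneg)

lemma inf_outside_ball_mono: "0 \<le> r1 \<Longrightarrow> r1 \<le> r2 \<Longrightarrow> inf_outside_ball V r1 \<le> inf_outside_ball V r2"
  by (rule inf_outside_ball_greatest) (auto intro: inf_outside_ball_le)

lemma inf_outside_ball_lipschitz:
  assumes r: "0 \<le> r1" "r1 \<le> r2"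
  shows "inf_outside_ball V r2 \<le> inf_outside_ball V r1 + M * (r2 - r1)"
proof -
  have "inf_outside_ball V r2 - M * (r2 - r1) \<le> inf_outside_ball V r1"
  proof (rule inf_outside_ball_greatest[OF r(1)])
    fix x :: 'a assume x: "r1 \<le> norm x"
    obtain x' where x': "r2 \<le> norm x'" "norm (x' - x) \<le> r2 - r1"
    proof (cases "x = 0")
      case True
      obtain e :: 'a where "norm e = r2" using vector_choose_size[of r2] r by auto
      then show ?thesis using that[of e] True x r by simp
    next
      case False
      define c where "c = r2 - r1"
      define x' where "x' = (1 + c / norm x) *\<^sub>R x"
      have "c \<ge> 0" "norm x > 0" using False r by (auto simp: c_def)
      have "x' - x = (c / norm x) *\<^sub>R x" unfolding x'_def by (simp add: algebra_simps)
      then have "norm (x' - x) = r2 - r1" using \<open>c \<ge> 0\<close> \<open>norm x > 0\<close> by (simp add: c_def)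
      moreover have "norm x' = (1 + c / norm x) * norm x"
        unfolding x'_def using \<open>c \<ge> 0\<close> \<open>norm x > 0\<close> by (simp add: abs_of_nonneg)
      then have "norm x' = norm x + (r2 - r1)" using \<open>norm x > 0\<close> by (simp add: distrib_right c_def)
      ultimately show ?thesis using that[of x'] x by simp
    qed
    have "inf_outside_ball V r2 \<le> V x'" by (rule inf_outside_ball_le[OF x'(1)])
    also have "\<dots> \<le> V x + M * norm (x' - x)" using V_lipschitz[of x' x] by simp
    also have "\<dots> \<le> V x + M * (r2 - r1)" using x'(2) lipschitz_const_nonneg by (simp add: mult_left_mono)
    finally show "inf_outside_ball V r2 - M * (r2 - r1) \<le> V x" by simp
  qed
  then show ?thesis by simp
qed

lemma continuous_on_inf_outside_ball: "continuous_on {0..} (inf_outside_ball V)"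
proof (rule lipschitz_on_continuous_on[of M], rule lipschitz_onI)
  fix x y :: real assume "x \<in> {0..}" "y \<in> {0..}"
  then show "dist (inf_outside_ball V x) (inf_outside_ball V y) \<le> M * dist x y"
    using inf_outside_ball_lipschitz[of x y] inf_outside_ball_lipschitz[of y x]
      inf_outside_ball_mono[of x y] inf_outside_ball_mono[of y x]
    by (cases "x \<le> y") (auto simp: dist_real_def abs_if algebra_simps)
qed (rule lipschitz_const_nonneg)

lemma inf_outside_ball_pos:
  assumes "\<rho> > 0"
  shows "inf_outside_ball V \<rho> > 0"
proof -
  obtain R where R: "\<And>x. R \<le> norm x \<Longrightarrow> 1 \<le> V x" using V_eventually_ge[of 1] by blast
  \<comment> \<open>on the compact annulus \<open>\<rho> \<le> |x| \<le> R\<close> the positive continuous \<open>V\<close> has a positive minimum\<close>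
  define A where "A = cball (0::'a) (max \<rho> R) - ball 0 \<rho>"
  have "compact A" unfolding A_def by (simp add: compact_diff)
  obtain e :: 'a where "norm e = \<rho>" using vector_choose_size[of \<rho>] assms by auto
  then have "e \<in> A" unfolding A_def by (simp add: dist_norm)
  then have "A \<noteq> {}" by blast
  have "continuous_on A V" by (rule continuous_on_V)
  then obtain xm where xm: "xm \<in> A" "\<And>y. y \<in> A \<Longrightarrow> V xm \<le> V y"
    using continuous_attains_inf[OF \<open>compact A\<close> \<open>A \<noteq> {}\<close>] by blast
  have "xm \<noteq> 0" using xm(1) assms unfolding A_def by auto
  have "min 1 (V xm) \<le> inf_outside_ball V \<rho>"
  proof (rule inf_outside_ball_greatest)
    fix x :: 'a assume "\<rho> \<le> norm x"
    show "min 1 (V xm) \<le> V x"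
    proof (cases "norm x \<le> max \<rho> R")
      case True
      then have "x \<in> A" using \<open>\<rho> \<le> norm x\<close> unfolding A_def by (simp add: dist_norm)
      then show ?thesis using xm(2) by fastforce
    next
      case False
      then have "R \<le> norm x" by linarith
      then show ?thesis using R[of x] by linarith
    qed
  qed (use assms in simp)
  then show ?thesis using V_pos[OF \<open>xm \<noteq> 0\<close>] by simp
qed

lemma inf_outside_ball_unbounded: "\<exists>\<rho>\<ge>0. B \<le> inf_outside_ball V \<rho>"
proof -
  obtain R where "\<And>x. R \<le> norm x \<Longrightarrow> B \<le> V x" using V_eventually_ge[of B] by blast
  then have "B \<le> inf_outside_ball V (max R 0)" by (intro inf_outside_ball_greatest) auto
  then show ?thesis by (intro exI[of _ "max R 0"]) auto
qed

lemma class_K_K_lower_bound: "class_K (K_lower_bound V)"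
  unfolding class_K_def
proof (intro conjI)
  show "continuous_on {0..} (K_lower_bound V)"
    unfolding K_lower_bound_def[abs_def] by (intro continuous_intros continuous_on_inf_outside_ball) auto
  show "K_lower_bound V 0 = 0" by (simp add: K_lower_bound_def)
  show "strict_mono_on {0..} (K_lower_bound V)"
  proof (rule strict_mono_onI)
    fix r s :: real assume "r \<in> {0..}" "s \<in> {0..}" "r < s"
    then have "r / (1 + r) < s / (1 + s)" "inf_outside_ball V s > 0"
      using inf_outside_ball_pos[of s] by (auto simp: field_simps)
    have "inf_outside_ball V r * (r / (1 + r)) \<le> inf_outside_ball V s * (r / (1 + r))"
      using inf_outside_ball_mono[of r s] \<open>r \<in> {0..}\<close> \<open>r < s\<close> by (intro mult_right_mono) auto
    also have "\<dots> < inf_outside_ball V s * (s / (1 + s))"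
      by (rule mult_strict_left_mono) fact+
    finally show "K_lower_bound V r < K_lower_bound V s" unfolding K_lower_bound_def .
  qed
qed

lemma K_lower_bound_le: "K_lower_bound V (norm x) \<le> V x"
proof -
  have "K_lower_bound V (norm x) \<le> inf_outside_ball V (norm x)"
    unfolding K_lower_bound_def using inf_outside_ball_nonneg[of "norm x"]
    by (intro mult_left_le) (auto simp: divide_le_eq add_pos_nonneg)
  then show ?thesis using inf_outside_ball_le[of "norm x" x] by simp
qed

lemma K_lower_bound_image: "K_lower_bound V ` {0..} = {0..}"
proof
  show "K_lower_bound V ` {0..} \<subseteq> {0..}" using class_K_nonneg[OF class_K_K_lower_bound] by auto
  show "{0..} \<subseteq> K_lower_bound V ` {0..}"
  proof
    fix y :: real assume "y \<in> {0..}"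
    obtain \<rho> where "\<rho> \<ge> 0" "2 * y \<le> inf_outside_ball V \<rho>" using inf_outside_ball_unbounded by blast
    define s where "s = max \<rho> 1"
    have "2 * y \<le> inf_outside_ball V s"
      using inf_outside_ball_mono[of \<rho> s] \<open>\<rho> \<ge> 0\<close> \<open>2 * y \<le> _\<close> unfolding s_def by simp
    moreover have "1 / 2 \<le> s / (1 + s)" unfolding s_def by (simp add: field_simps)
    ultimately have "(2 * y) * (1 / 2) \<le> K_lower_bound V s"
      unfolding K_lower_bound_def using \<open>y \<in> {0..}\<close> by (intro mult_mono) (auto simp: s_def)
    then show "y \<in> K_lower_bound V ` {0..}"
      using class_K_image[OF class_K_K_lower_bound, of s y] \<open>y \<in> {0..}\<close> by (simp add: s_def)
  qed
qed

theorem norm_le_class_K_of_proper: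
  obtains G where "class_K G" "\<And>x. norm x \<le> G (V x)"
proof
  let ?\<alpha> = "K_lower_bound V"
  show "class_K (class_K_inv ?\<alpha>)"
    by (rule class_K_inv_class_K[OF class_K_K_lower_bound K_lower_bound_image])
  fix x
  have V_in: "V x \<in> ?\<alpha> ` {0..}" using K_lower_bound_image V_nonneg by simp
  show "norm x \<le> class_K_inv ?\<alpha> (V x)"
  proof (rule ccontr)
    assume "\<not> norm x \<le> class_K_inv ?\<alpha> (V x)"
    then have "?\<alpha> (class_K_inv ?\<alpha> (V x)) < ?\<alpha> (norm x)"
      using class_K_strict[OF class_K_K_lower_bound class_K_inv_nonneg[OF class_K_K_lower_bound V_in]] by simp
    then show False using class_K_apply_inv[OF class_K_K_lower_bound V_in] K_lower_bound_le[of x] by simp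
  qed
qed

end

section \<open>The extremum seeking system\<close>

lemma common_denominator:
  assumes "finite I" "\<And>i. i \<in> I \<Longrightarrow> w i \<in> \<rat>"
  shows "\<exists>Q::int. Q > 0 \<and> (\<forall>i\<in>I. w i * of_int Q \<in> \<int>)"
  using assms
proof (induction I rule: finite_induct)
  case (insert i I)
  then obtain Q :: int where Q: "Q > 0" "\<forall>k\<in>I. w k * of_int Q \<in> \<int>" by auto
  obtain a q :: int where "q > 0" "w i = of_int a / of_int q"
    using insert.prems[of i] Rats_cases' by (metis insertI1)
  then have "w i * of_int q \<in> \<int>" by simp
  have "w k * of_int (Q * q) \<in> \<int>" if "k \<in> insert i I" for k
  proof (cases "k = i")
    case True
    have "(w i * of_int q) * of_int Q \<in> \<int>" using \<open>w i * of_int q \<in> \<int>\<close> by (rule Ints_mult[OF _ Ints_of_int])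
    then show ?thesis using True by (simp add: mult_ac)
  next
    case False
    have "(w k * of_int Q) * of_int q \<in> \<int>" using Q(2) False that by (auto intro: Ints_mult[OF _ Ints_of_int])
    then show ?thesis by (simp add: mult_ac)
  qed
  then show ?case using Q(1) \<open>q > 0\<close> by (intro exI[of _ "Q * q"]) auto
qed (auto intro: exI[of _ 1])

locale extremum_seeking =
  fixes b0 :: "'a::euclidean_space \<Rightarrow> 'a" and J :: "'a \<Rightarrow> real" and dJ :: "'a \<Rightarrow> 'a"
    and xs :: 'a and r :: nat and b :: "nat \<Rightarrow> nat \<Rightarrow> 'a" and \<omega> :: "nat \<Rightarrow> real"
    and \<gamma> \<kappa>3 M LJ L0 :: real and \<alpha> :: "real \<Rightarrow> real"
  assumes \<omega>_pos: "\<And>i. i \<in> {1..r} \<Longrightarrow> \<omega> i > 0"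
    and \<omega>_rational: "\<And>i. i \<in> {1..r} \<Longrightarrow> \<omega> i \<in> \<rat>"
    and \<omega>_inj: "inj_on \<omega> {1..r}"
    and J_deriv: "\<And>x. (J has_derivative (\<lambda>h. dJ x \<bullet> h)) (at x)"
    and dJ_bounded: "\<And>x. norm (dJ x) \<le> M"
    and dJ_lipschitz: "\<And>x y. norm (dJ x - dJ y) \<le> LJ * norm (x - y)" and LJ_nonneg: "LJ \<ge> 0"
    and excitation: "\<And>v. \<gamma> * (norm v)\<^sup>2 \<le> (\<Sum>i\<in>{1..r}. \<Sum>j\<in>{1,2}. (b i j \<bullet> v)\<^sup>2)"
    and b0_bounded: "\<And>x. norm (b0 x) \<le> \<kappa>3 * norm (dJ x)" and \<kappa>3_nonneg: "\<kappa>3 \<ge> 0"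
    and b0_lipschitz: "\<And>x y. norm (b0 x - b0 y) \<le> L0 * norm (x - y)" and L0_nonneg: "L0 \<ge> 0"
    and \<kappa>3_less_\<gamma>: "\<kappa>3 < \<gamma>"
    and xs_strict_min: "\<And>x. x \<noteq> xs \<Longrightarrow> J xs < J x"
    and J_proper: "filterlim J at_top at_infinity"
    and \<alpha>_class_K: "class_K \<alpha>"
    and \<alpha>_le_dJ: "\<And>x. \<alpha> (norm (x - xs)) \<le> norm (dJ x)"
    and M_pos: "M > 0"
begin

lemma J_lipschitz: "\<bar>J x - J y\<bar> \<le> M * norm (x - y)"
proof -
  have "norm (J x - J y) \<le> M * norm (x - y)"
  proof (rule differentiable_bound[of UNIV J "\<lambda>x h. dJ x \<bullet> h"])
    fix z :: 'a
    show "(J has_derivative (\<bullet>) (dJ z)) (at z within UNIV)" using J_deriv by simp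
    show "onorm ((\<bullet>) (dJ z)) \<le> M"
    proof (rule onorm_le)
      fix h
      have "norm (dJ z \<bullet> h) \<le> norm (dJ z) * norm h" by (simp add: Cauchy_Schwarz_ineq2)
      also have "\<dots> \<le> M * norm h" by (intro mult_right_mono dJ_bounded) auto
      finally show "norm (dJ z \<bullet> h) \<le> M * norm h" .
    qed
  qed auto
  then show ?thesis by simp
qed

lemma J_taylor: "\<bar>J y - J x - dJ x \<bullet> (y - x)\<bar> \<le> LJ * (norm (y - x))\<^sup>2"
proof -
  have "norm ((J y - dJ x \<bullet> y) - (J x - dJ x \<bullet> x)) \<le> (LJ * norm (y - x)) * norm (y - x)"
  proof (rule differentiable_bound[of "closed_segment x y" "\<lambda>z. J z - dJ x \<bullet> z" "\<lambda>z h. (dJ z - dJ x) \<bullet> h"])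
    fix z assume z: "z \<in> closed_segment x y"
    show "((\<lambda>z. J z - dJ x \<bullet> z) has_derivative (\<lambda>h. (dJ z - dJ x) \<bullet> h)) (at z within closed_segment x y)"
      using has_derivative_at_withinI[OF J_deriv]
      by (auto intro!: derivative_eq_intros simp: inner_diff_left)
    show "onorm (\<lambda>h. (dJ z - dJ x) \<bullet> h) \<le> LJ * norm (y - x)"
    proof (rule onorm_le)
      fix h
      have "norm ((dJ z - dJ x) \<bullet> h) \<le> norm (dJ z - dJ x) * norm h" by (simp add: Cauchy_Schwarz_ineq2)
      also have "\<dots> \<le> (LJ * norm (y - x)) * norm h"
        using dJ_lipschitz[of z x] segment_bound1[OF z] LJ_nonneg
        by (intro mult_right_mono) (auto intro: order_trans mult_left_mono)
      finally show "norm ((dJ z - dJ x) \<bullet> h) \<le> LJ * norm (y - x) * norm h" .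
    qed
  qed auto
  then show ?thesis by (simp add: algebra_simps power2_eq_square inner_diff_right)
qed

lemma \<alpha>_le_M: "s \<ge> 0 \<Longrightarrow> \<alpha> s \<le> M"
proof -
  assume "s \<ge> 0"
  then obtain x :: 'a where "norm x = s" using vector_choose_size by blast
  then show ?thesis using \<alpha>_le_dJ[of "x + xs"] dJ_bounded[of "x + xs"] by simp
qed

lemma common_dither_period: "\<exists>T>0. \<forall>i\<in>{1..r}. trig_period (\<omega> i) T"
proof -
  obtain Q :: int where Q: "Q > 0" "\<forall>i\<in>{1..r}. \<omega> i * of_int Q \<in> \<int>"
    using common_denominator[of "{1..r}" \<omega>] \<omega>_rational by auto
  have "trig_period (\<omega> i) (2 * pi * of_int Q)" if "i \<in> {1..r}" for i
  proof -
    have "\<omega> i * of_int Q \<in> \<int>" using Q(2) that by blast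
    then obtain m where "\<omega> i * of_int Q = of_int m" by (elim Ints_cases)
    then show ?thesis unfolding trig_period_def by (intro exI[of _ m]) (simp add: algebra_simps)
  qed
  moreover have "2 * pi * of_int Q > 0" using Q(1) by simp
  ultimately show ?thesis by blast
qed

lemma \<omega>_nonneg: "i \<in> {1..r} \<Longrightarrow> \<omega> i \<ge> 0"
  using \<omega>_pos by (auto intro: less_imp_le)

definition dither_sum :: "real \<Rightarrow> real \<Rightarrow> 'a" where
  "dither_sum y \<theta> = (\<Sum>i\<in>{1..r}. \<Sum>j\<in>{1,2}. dither \<omega> i j y \<theta> *\<^sub>R b i j)"

definition dither_gain :: real where
  "dither_gain = (\<Sum>i\<in>{1..r}. \<Sum>j\<in>{1,2}. sqrt (2 * \<omega> i) * norm (b i j))"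

definition dither_primitive :: "real \<Rightarrow> real \<Rightarrow> 'a" where
  "dither_primitive y \<theta> = (\<Sum>i\<in>{1..r}.
     sqrt (2 / \<omega> i) *\<^sub>R (sin (y + \<omega> i * \<theta>) *\<^sub>R b i 1 - cos (y + \<omega> i * \<theta>) *\<^sub>R b i 2))"

lemma es_rhs_eq: "es_rhs b0 J xs r b \<omega> \<epsilon> x \<tau> = b0 (x + xs) + (1 / \<epsilon>) *\<^sub>R dither_sum (J (x + xs)) \<tau>"
  unfolding es_rhs_def dither_sum_def ..

lemma dither_gain_nonneg: "dither_gain \<ge> 0"
  unfolding dither_gain_def using \<omega>_nonneg by (auto intro!: sum_nonneg)

lemma norm_dither_sum_le: "norm (dither_sum y \<theta>) \<le> dither_gain"
  unfolding dither_sum_def dither_gain_def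
  by (intro order_trans[OF norm_sum] sum_mono)
    (use abs_dither_le \<omega>_nonneg in \<open>auto intro!: mult_right_mono\<close>)

lemma dither_sum_lipschitz: "norm (dither_sum y \<theta> - dither_sum y' \<theta>) \<le> dither_gain * \<bar>y - y'\<bar>"
proof -
  have "dither_sum y \<theta> - dither_sum y' \<theta>
      = (\<Sum>i\<in>{1..r}. \<Sum>j\<in>{1,2}. (dither \<omega> i j y \<theta> - dither \<omega> i j y' \<theta>) *\<^sub>R b i j)"
    unfolding dither_sum_def by (simp add: sum_subtractf scaleR_diff_left)
  also have "norm \<dots> \<le> (\<Sum>i\<in>{1..r}. \<Sum>j\<in>{1,2}. (sqrt (2 * \<omega> i) * norm (b i j)) * \<bar>y - y'\<bar>)"
  proof (rule order_trans[OF norm_sum sum_mono], rule order_trans[OF norm_sum sum_mono])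
    fix i j assume "i \<in> {1..r}"
    show "norm ((dither \<omega> i j y \<theta> - dither \<omega> i j y' \<theta>) *\<^sub>R b i j) \<le> sqrt (2 * \<omega> i) * norm (b i j) * \<bar>y - y'\<bar>"
      using mult_right_mono[OF dither_lipschitz[of \<omega> i j y \<theta> y', OF \<omega>_nonneg[OF \<open>i \<in> {1..r}\<close>]],
          of "norm (b i j)"]
      by (simp add: mult_ac)
  qed
  also have "\<dots> = dither_gain * \<bar>y - y'\<bar>" unfolding dither_gain_def by (simp add: sum_distrib_left algebra_simps)
  finally show ?thesis .
qed

lemma has_vector_derivative_dither_primitive:
  "(dither_primitive y has_vector_derivative dither_sum y \<theta>) (at \<theta>)"
  unfolding dither_primitive_def[abs_def] dither_sum_def
proof (rule has_vector_derivative_sum)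
  fix i assume "i \<in> {1..r}"
  then have sqrt_eq: "sqrt (2 * \<omega> i) = sqrt (2 / \<omega> i) * \<omega> i" using sqrt_two_div_mult \<omega>_pos by metis
  have "((\<lambda>\<theta>. sqrt (2 / \<omega> i) *\<^sub>R (sin (y + \<omega> i * \<theta>) *\<^sub>R b i 1 - cos (y + \<omega> i * \<theta>) *\<^sub>R b i 2))
      has_vector_derivative sqrt (2 / \<omega> i) *\<^sub>R ((cos (y + \<omega> i * \<theta>) * (0 + \<omega> i * 1)) *\<^sub>R b i 1
        - (- sin (y + \<omega> i * \<theta>) * (0 + \<omega> i * 1)) *\<^sub>R b i 2)) (at \<theta>)"
    by (auto intro!: derivative_eq_intros)
  then show "((\<lambda>\<theta>. sqrt (2 / \<omega> i) *\<^sub>R (sin (y + \<omega> i * \<theta>) *\<^sub>R b i 1 - cos (y + \<omega> i * \<theta>) *\<^sub>R b i 2))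
      has_vector_derivative (\<Sum>j\<in>{1,2}. dither \<omega> i j y \<theta> *\<^sub>R b i j)) (at \<theta>)"
    unfolding dither_def sqrt_eq by (simp add: algebra_simps)
qed

lemma dither_primitive_periodic:
  assumes "\<forall>i\<in>{1..r}. trig_period (\<omega> i) T"
  shows "dither_primitive y (\<theta> + T) = dither_primitive y \<theta>"
  unfolding dither_primitive_def using sin_trig_period cos_trig_period assms by (intro sum.cong) auto

definition dither_dy_along :: "real \<Rightarrow> 'a \<Rightarrow> nat \<Rightarrow> real \<Rightarrow> real" where
  "dither_dy_along y g i \<theta> = - sqrt (2 * \<omega> i) * sin (y + \<omega> i * \<theta>) * (g \<bullet> b i 1)
     + sqrt (2 * \<omega> i) * cos (y + \<omega> i * \<theta>) * (g \<bullet> b i 2)"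

definition dither_primitive_along :: "real \<Rightarrow> 'a \<Rightarrow> nat \<Rightarrow> real \<Rightarrow> real" where
  "dither_primitive_along y g k \<theta> =
     sqrt (2 / \<omega> k) * (sin (y + \<omega> k * \<theta>) * (g \<bullet> b k 1) - cos (y + \<omega> k * \<theta>) * (g \<bullet> b k 2))"

text \<open>The second-order term of the averaged dynamics (the Lie bracket of the input vector fields),
  evaluated along \<open>g\<close>.\<close>
definition bracket_term :: "real \<Rightarrow> 'a \<Rightarrow> real \<Rightarrow> real \<Rightarrow> real" where
  "bracket_term y g \<theta>0 \<theta> = (\<Sum>i\<in>{1..r}. \<Sum>j\<in>{1,2}.
     dither_dy \<omega> i j y \<theta> * (g \<bullet> (dither_primitive y \<theta> - dither_primitive y \<theta>0)) * (g \<bullet> b i j))"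

lemma bracket_term_eq:
  "bracket_term y g \<theta>0 \<theta> =
     (\<Sum>i\<in>{1..r}. \<Sum>k\<in>{1..r}. dither_dy_along y g i \<theta> * dither_primitive_along y g k \<theta>)
     - (g \<bullet> dither_primitive y \<theta>0) * (\<Sum>i\<in>{1..r}. dither_dy_along y g i \<theta>)"
proof -
  have primitive: "g \<bullet> dither_primitive y \<theta> = (\<Sum>k\<in>{1..r}. dither_primitive_along y g k \<theta>)"
    unfolding dither_primitive_def dither_primitive_along_def
    by (simp add: inner_sum_right inner_diff_right algebra_simps)
  have "bracket_term y g \<theta>0 \<theta> = (\<Sum>i\<in>{1..r}. dither_dy_along y g i \<theta>
      * ((\<Sum>k\<in>{1..r}. dither_primitive_along y g k \<theta>) - g \<bullet> dither_primitive y \<theta>0))"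
    unfolding bracket_term_def inner_diff_right primitive[symmetric]
    by (intro sum.cong refl) (simp add: dither_dy_def dither_dy_along_def algebra_simps)
  then show ?thesis
    by (simp add: right_diff_distrib sum_distrib_left sum_distrib_right sum_subtractf algebra_simps)
qed

lemma dither_dy_along_primitive:
  assumes "i \<in> {1..r}" "trig_period (\<omega> i) T"
  shows "\<exists>G. (\<forall>\<theta>. (G has_real_derivative dither_dy_along y g i \<theta>) (at \<theta>)) \<and> (\<forall>\<theta>. G (\<theta> + T) = G \<theta>)"
  using dither_derivative_primitive[of "\<omega> i" T y "g \<bullet> b i 1" "g \<bullet> b i 2"] \<omega>_pos assms
  unfolding dither_dy_along_def by auto

text \<open>Cross terms of distinct frequencies average out; this is where \<open>\<omega>_inj\<close> enters.\<close>
lemma dither_product_along_primitive: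
  assumes "i \<in> {1..r}" "k \<in> {1..r}" "\<forall>i\<in>{1..r}. trig_period (\<omega> i) T"
  shows "\<exists>F. (\<forall>\<theta>. (F has_real_derivative dither_dy_along y g i \<theta> * dither_primitive_along y g k \<theta>) (at \<theta>))
    \<and> (\<forall>\<theta>. F (\<theta> + T) - F \<theta> = (if k = i then - T * (\<Sum>j\<in>{1,2}. (g \<bullet> b i j)\<^sup>2) else 0))"
proof -
  have "(\<omega> i = \<omega> k) = (k = i)" using \<omega>_inj assms(1,2) by (auto dest: inj_onD)
  then show ?thesis
    using dither_product_primitive[of "\<omega> i" "\<omega> k" T y "g \<bullet> b i 1" "g \<bullet> b i 2" "g \<bullet> b k 1" "g \<bullet> b k 2"]
      \<omega>_pos assms
    unfolding dither_dy_along_def dither_primitive_along_def by (auto simp: power2_eq_square)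
qed

lemma bracket_term_primitive:
  assumes T: "\<forall>i\<in>{1..r}. trig_period (\<omega> i) T"
  obtains R where "\<And>\<theta>. (R has_real_derivative bracket_term y g \<theta>0 \<theta>) (at \<theta>)"
    and "R (\<theta>0 + T) - R \<theta>0 = - T * (\<Sum>i\<in>{1..r}. \<Sum>j\<in>{1,2}. (g \<bullet> b i j)\<^sup>2)"
proof -
  have "\<forall>i\<in>{1..r}. \<forall>k\<in>{1..r}. \<exists>F.
      (\<forall>\<theta>. (F has_real_derivative dither_dy_along y g i \<theta> * dither_primitive_along y g k \<theta>) (at \<theta>))
      \<and> (\<forall>\<theta>. F (\<theta> + T) - F \<theta> = (if k = i then - T * (\<Sum>j\<in>{1,2}. (g \<bullet> b i j)\<^sup>2) else 0))"
    using dither_product_along_primitive[OF _ _ T] by blast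
  then obtain F where F: "\<And>i k. i \<in> {1..r} \<Longrightarrow> k \<in> {1..r} \<Longrightarrow>
      (\<forall>\<theta>. (F i k has_real_derivative dither_dy_along y g i \<theta> * dither_primitive_along y g k \<theta>) (at \<theta>))
      \<and> (\<forall>\<theta>. F i k (\<theta> + T) - F i k \<theta> = (if k = i then - T * (\<Sum>j\<in>{1,2}. (g \<bullet> b i j)\<^sup>2) else 0))"
    by metis
  have "\<forall>i\<in>{1..r}. \<exists>G. (\<forall>\<theta>. (G has_real_derivative dither_dy_along y g i \<theta>) (at \<theta>))
      \<and> (\<forall>\<theta>. G (\<theta> + T) = G \<theta>)"
    using dither_dy_along_primitive T by blast
  then obtain G where G: "\<And>i. i \<in> {1..r} \<Longrightarrow>
      (\<forall>\<theta>. (G i has_real_derivative dither_dy_along y g i \<theta>) (at \<theta>)) \<and> (\<forall>\<theta>. G i (\<theta> + T) = G i \<theta>)"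
    by metis
  define h0 where "h0 = g \<bullet> dither_primitive y \<theta>0"
  define R where "R \<theta> = (\<Sum>i\<in>{1..r}. \<Sum>k\<in>{1..r}. F i k \<theta>) - h0 * (\<Sum>i\<in>{1..r}. G i \<theta>)" for \<theta>
  show ?thesis
  proof
    show "(R has_real_derivative bracket_term y g \<theta>0 \<theta>) (at \<theta>)" for \<theta>
      unfolding R_def bracket_term_eq h0_def by (intro DERIV_diff DERIV_sum DERIV_cmult) (use F G in auto)
    have "R (\<theta>0 + T) - R \<theta>0
        = (\<Sum>i\<in>{1..r}. \<Sum>k\<in>{1..r}. F i k (\<theta>0 + T) - F i k \<theta>0) - h0 * (\<Sum>i\<in>{1..r}. G i (\<theta>0 + T) - G i \<theta>0)"
      unfolding R_def by (simp add: sum_subtractf algebra_simps)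
    also have "\<dots> = (\<Sum>i\<in>{1..r}. \<Sum>k\<in>{1..r}. if k = i then - T * (\<Sum>j\<in>{1,2}. (g \<bullet> b i j)\<^sup>2) else 0)"
      using F G by simp
    also have "\<dots> = - T * (\<Sum>i\<in>{1..r}. \<Sum>j\<in>{1,2}. (g \<bullet> b i j)\<^sup>2)"
      by (simp add: sum_distrib_left)
    finally show "R (\<theta>0 + T) - R \<theta>0 = - T * (\<Sum>i\<in>{1..r}. \<Sum>j\<in>{1,2}. (g \<bullet> b i j)\<^sup>2)" .
  qed
qed

definition speed_bound :: real where
  "speed_bound = \<kappa>3 * M + dither_gain"

lemma speed_bound_nonneg: "speed_bound \<ge> 0"
  unfolding speed_bound_def using \<kappa>3_nonneg M_pos dither_gain_nonneg by simp

lemma norm_b0_le: "norm (b0 x) \<le> \<kappa>3 * M"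
  using b0_bounded[of x] mult_left_mono[OF dJ_bounded \<kappa>3_nonneg] by (rule order_trans)

lemma norm_es_rhs_le:
  assumes "0 < \<epsilon>" "\<epsilon> \<le> 1"
  shows "norm (es_rhs b0 J xs r b \<omega> \<epsilon> x \<tau>) \<le> speed_bound / \<epsilon>"
proof -
  have "norm (es_rhs b0 J xs r b \<omega> \<epsilon> x \<tau>) \<le> norm (b0 (x + xs)) + norm ((1 / \<epsilon>) *\<^sub>R dither_sum (J (x + xs)) \<tau>)"
    unfolding es_rhs_eq by (rule norm_triangle_ineq)
  also have "\<dots> \<le> \<kappa>3 * M / \<epsilon> + dither_gain / \<epsilon>"
  proof (rule add_mono)
    have "\<kappa>3 * M * \<epsilon> \<le> \<kappa>3 * M" using assms \<kappa>3_nonneg M_pos by (intro mult_left_le) auto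
    then have "\<kappa>3 * M \<le> \<kappa>3 * M / \<epsilon>" using assms by (simp add: le_divide_eq)
    then show "norm (b0 (x + xs)) \<le> \<kappa>3 * M / \<epsilon>" using norm_b0_le[of "x + xs"] by linarith
    show "norm ((1 / \<epsilon>) *\<^sub>R dither_sum (J (x + xs)) \<tau>) \<le> dither_gain / \<epsilon>"
      using norm_dither_sum_le[of "J (x + xs)" \<tau>] assms by (simp add: divide_right_mono)
  qed
  also have "\<dots> = speed_bound / \<epsilon>" unfolding speed_bound_def by (simp add: add_divide_distrib)
  finally show ?thesis .
qed

lemma es_rhs_lipschitz:
  assumes "\<epsilon> > 0"
  shows "norm (es_rhs b0 J xs r b \<omega> \<epsilon> x \<tau> - es_rhs b0 J xs r b \<omega> \<epsilon> y \<tau>)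
    \<le> (L0 + dither_gain * M / \<epsilon>) * norm (x - y)"
proof -
  have "es_rhs b0 J xs r b \<omega> \<epsilon> x \<tau> - es_rhs b0 J xs r b \<omega> \<epsilon> y \<tau>
      = (b0 (x + xs) - b0 (y + xs)) + (1 / \<epsilon>) *\<^sub>R (dither_sum (J (x + xs)) \<tau> - dither_sum (J (y + xs)) \<tau>)"
    unfolding es_rhs_eq by (simp add: algebra_simps)
  then have "norm (es_rhs b0 J xs r b \<omega> \<epsilon> x \<tau> - es_rhs b0 J xs r b \<omega> \<epsilon> y \<tau>)
      \<le> norm (b0 (x + xs) - b0 (y + xs))
        + (1 / \<epsilon>) * norm (dither_sum (J (x + xs)) \<tau> - dither_sum (J (y + xs)) \<tau>)"
    using assms by (metis norm_triangle_ineq norm_scaleR abs_of_pos zero_less_divide_1_iff)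
  also have "\<dots> \<le> L0 * norm (x - y) + (1 / \<epsilon>) * (dither_gain * (M * norm (x - y)))"
  proof (rule add_mono)
    show "norm (b0 (x + xs) - b0 (y + xs)) \<le> L0 * norm (x - y)"
      using b0_lipschitz[of "x + xs" "y + xs"] by simp
    have "norm (dither_sum (J (x + xs)) \<tau> - dither_sum (J (y + xs)) \<tau>) \<le> dither_gain * (M * norm (x - y))"
      by (rule order_trans[OF dither_sum_lipschitz mult_left_mono[OF _ dither_gain_nonneg]])
        (use J_lipschitz[of "x + xs" "y + xs"] in simp)
    then show "(1 / \<epsilon>) * norm (dither_sum (J (x + xs)) \<tau> - dither_sum (J (y + xs)) \<tau>)
        \<le> (1 / \<epsilon>) * (dither_gain * (M * norm (x - y)))"
      using assms by (intro mult_left_mono) auto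
  qed
  also have "\<dots> = (L0 + dither_gain * M / \<epsilon>) * norm (x - y)" by (simp add: algebra_simps)
  finally show ?thesis .
qed

lemma continuous_on_es_rhs:
  fixes \<phi> :: "'b::t2_space \<Rightarrow> 'a"
  assumes "continuous_on S \<phi>" "continuous_on S \<psi>"
  shows "continuous_on S (\<lambda>s. es_rhs b0 J xs r b \<omega> \<epsilon> (\<phi> s) (\<psi> s))"
proof -
  have b0: "continuous_on UNIV b0"
    by (rule lipschitz_on_continuous_on[of L0], rule lipschitz_onI)
      (use b0_lipschitz L0_nonneg in \<open>auto simp: dist_norm\<close>)
  have J: "continuous_on UNIV J"
    using J_deriv has_derivative_continuous by (blast intro: continuous_at_imp_continuous_on)
  show ?thesis
    unfolding es_rhs_def using assms
    by (intro continuous_intros continuous_on_compose2[OF b0] continuous_on_dither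
        continuous_on_compose2[OF J]) auto
qed

lemma bracket_remainder_bound:
  assumes g: "norm g \<le> M"
  shows "\<bar>\<Sum>i\<in>{1..r}. \<Sum>j\<in>{1,2}. (g \<bullet> b i j) * (dither \<omega> i j y \<theta> - dither \<omega> i j y0 \<theta> - dither_dy \<omega> i j y0 \<theta> * w)\<bar>
      \<le> M * dither_gain * ((y - y0)\<^sup>2 + \<bar>y - y0 - w\<bar>)"
proof -
  have "\<bar>(g \<bullet> b i j) * (dither \<omega> i j y \<theta> - dither \<omega> i j y0 \<theta> - dither_dy \<omega> i j y0 \<theta> * w)\<bar>
      \<le> (M * (sqrt (2 * \<omega> i) * norm (b i j))) * ((y - y0)\<^sup>2 + \<bar>y - y0 - w\<bar>)" if "i \<in> {1..r}" for i j
  proof -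
    have gb: "\<bar>g \<bullet> b i j\<bar> \<le> M * norm (b i j)"
      using Cauchy_Schwarz_ineq2[of g "b i j"] g by (meson mult_right_mono norm_ge_zero order_trans)
    have remainder: "\<bar>dither \<omega> i j y \<theta> - dither \<omega> i j y0 \<theta> - dither_dy \<omega> i j y0 \<theta> * w\<bar>
        \<le> sqrt (2 * \<omega> i) * ((y - y0)\<^sup>2 + \<bar>y - y0 - w\<bar>)"
    proof -
      have "dither \<omega> i j y \<theta> - dither \<omega> i j y0 \<theta> - dither_dy \<omega> i j y0 \<theta> * w
          = (dither \<omega> i j y \<theta> - dither \<omega> i j y0 \<theta> - dither_dy \<omega> i j y0 \<theta> * (y - y0))
            + dither_dy \<omega> i j y0 \<theta> * (y - y0 - w)"
        by (simp add: algebra_simps)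
      also have "\<bar>\<dots>\<bar> \<le> sqrt (2 * \<omega> i) * (y - y0)\<^sup>2 + sqrt (2 * \<omega> i) * \<bar>y - y0 - w\<bar>"
        using \<omega>_nonneg[OF that]
        by (intro order_trans[OF abs_triangle_ineq add_mono] dither_taylor)
          (auto simp: abs_mult intro: mult_right_mono abs_dither_dy_le)
      finally show ?thesis by (simp add: algebra_simps)
    qed
    show ?thesis
      unfolding abs_mult using mult_mono[OF gb remainder] M_pos by (simp add: mult_ac)
  qed
  then have "\<bar>\<Sum>i\<in>{1..r}. \<Sum>j\<in>{1,2}. (g \<bullet> b i j) * (dither \<omega> i j y \<theta> - dither \<omega> i j y0 \<theta> - dither_dy \<omega> i j y0 \<theta> * w)\<bar>
      \<le> (\<Sum>i\<in>{1..r}. \<Sum>j\<in>{1,2}. (M * (sqrt (2 * \<omega> i) * norm (b i j))) * ((y - y0)\<^sup>2 + \<bar>y - y0 - w\<bar>))"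
    by (intro order_trans[OF sum_abs] sum_mono order_trans[OF sum_abs]) auto
  also have "\<dots> = M * dither_gain * ((y - y0)\<^sup>2 + \<bar>y - y0 - w\<bar>)"
    unfolding dither_gain_def by (simp add: sum_distrib_right sum_distrib_left algebra_simps)
  finally show ?thesis .
qed

definition corrected_speed_bound :: "real \<Rightarrow> real" where
  "corrected_speed_bound T = \<kappa>3 * M + dither_gain * M * speed_bound * T"

definition averaging_rate_bound :: "real \<Rightarrow> real" where
  "averaging_rate_bound T = M * L0 * speed_bound * T
     + M * dither_gain * ((M\<^sup>2 + LJ) * (speed_bound * T)\<^sup>2 + M * corrected_speed_bound T * T)"

definition period_error_bound :: "real \<Rightarrow> real" where
  "period_error_bound T = averaging_rate_bound T + LJ * (corrected_speed_bound T)\<^sup>2 * T"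

lemma corrected_speed_bound_nonneg: "T \<ge> 0 \<Longrightarrow> corrected_speed_bound T \<ge> 0"
  unfolding corrected_speed_bound_def using \<kappa>3_nonneg M_pos dither_gain_nonneg speed_bound_nonneg by simp

lemma period_error_bound_nonneg: "T \<ge> 0 \<Longrightarrow> period_error_bound T \<ge> 0"
  unfolding period_error_bound_def averaging_rate_bound_def
  using M_pos L0_nonneg LJ_nonneg speed_bound_nonneg dither_gain_nonneg corrected_speed_bound_nonneg[of T]
  by (intro add_nonneg_nonneg mult_nonneg_nonneg) auto

definition comparison_offset :: "real \<Rightarrow> real" where
  "comparison_offset T = T * (\<gamma> - \<kappa>3) * M\<^sup>2 / 2 + T * period_error_bound T + M * speed_bound * T"

lemma comparison_offset_nonneg: "T \<ge> 0 \<Longrightarrow> comparison_offset T \<ge> 0"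
  unfolding comparison_offset_def using \<kappa>3_less_\<gamma> period_error_bound_nonneg[of T] M_pos speed_bound_nonneg
  by simp

definition cost_gap :: "'a \<Rightarrow> real" where
  "cost_gap x = J (x + xs) - J xs"

lemma cost_gap_nonneg: "cost_gap x \<ge> 0"
  unfolding cost_gap_def using xs_strict_min[of "x + xs"] by (cases "x = 0") auto

lemma cost_gap_le: "cost_gap x \<le> M * norm x"
  using J_lipschitz[of "x + xs" xs] unfolding cost_gap_def by simp

lemma cost_gap_lipschitz: "\<bar>cost_gap x - cost_gap y\<bar> \<le> M * norm (x - y)"
  using J_lipschitz[of "x + xs" "y + xs"] unfolding cost_gap_def by simp

lemma norm_le_class_K_of_cost_gap:
  obtains G where "class_K G" "\<And>x. norm x \<le> G (cost_gap x)"
proof (rule norm_le_class_K_of_proper)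
  show "cost_gap 0 = 0" by (simp add: cost_gap_def)
  show "cost_gap x > 0" if "x \<noteq> 0" for x
    unfolding cost_gap_def using xs_strict_min[of "x + xs"] that by simp
  show "\<bar>cost_gap x - cost_gap y\<bar> \<le> M * norm (x - y)" for x y by (rule cost_gap_lipschitz)
  show "filterlim cost_gap at_top at_infinity"
    unfolding filterlim_at_top eventually_at_infinity
  proof
    fix B
    obtain R where R: "\<And>x. R \<le> norm x \<Longrightarrow> B + J xs \<le> J x"
      using J_proper unfolding filterlim_at_top eventually_at_infinity by blast
    have "B \<le> cost_gap x" if "R + norm xs \<le> norm x" for x
      using R[of "x + xs"] that norm_triangle_ineq4[of "x + xs" xs] unfolding cost_gap_def by simp
    then show "\<exists>b. \<forall>x. b \<le> norm x \<longrightarrow> B \<le> cost_gap x" by blast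
  qed
qed blast

text \<open>The cost decreases at rate \<open>(\<gamma> - \<kappa>3) |\<nabla>J|\<^sup>2\<close> on average; \<open>|\<nabla>J (x + xs)| \<ge> \<alpha> |x| \<ge> \<alpha> (cost_gap x / M)\<close>
  turns this into a class K function of the cost gap.\<close>
definition decay_rate :: "real \<Rightarrow> real" where
  "decay_rate v = (\<gamma> - \<kappa>3) * (\<alpha> (v / M))\<^sup>2"

lemma class_K_decay_rate: "class_K decay_rate"
  unfolding class_K_def
proof (intro conjI)
  show "continuous_on {0..} decay_rate" unfolding decay_rate_def
    by (intro continuous_intros continuous_on_compose2[OF continuous_on_class_K[OF \<alpha>_class_K]])
      (use M_pos in auto)
  show "decay_rate 0 = 0" unfolding decay_rate_def using class_K_zero[OF \<alpha>_class_K] by simp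
  show "strict_mono_on {0..} decay_rate"
  proof (rule strict_mono_onI)
    fix u v :: real assume "u \<in> {0..}" "v \<in> {0..}" "u < v"
    then have "\<alpha> (u / M) < \<alpha> (v / M)" "0 \<le> \<alpha> (u / M)"
      using class_K_strict[OF \<alpha>_class_K] class_K_nonneg[OF \<alpha>_class_K] M_pos by (auto simp: divide_strict_right_mono)
    then have "(\<alpha> (u / M))\<^sup>2 < (\<alpha> (v / M))\<^sup>2" by (intro power_strict_mono) auto
    then show "decay_rate u < decay_rate v" unfolding decay_rate_def using \<kappa>3_less_\<gamma> by simp
  qed
qed

lemma decay_rate_le: "v \<ge> 0 \<Longrightarrow> decay_rate v \<le> (\<gamma> - \<kappa>3) * M\<^sup>2"
  unfolding decay_rate_def using \<kappa>3_less_\<gamma> \<alpha>_le_M[of "v / M"] class_K_nonneg[OF \<alpha>_class_K, of "v / M"] M_pos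
  by (intro mult_left_mono power_mono) auto

lemma decay_rate_cost_gap_le: "decay_rate (cost_gap x) \<le> (\<gamma> - \<kappa>3) * (norm (dJ (x + xs)))\<^sup>2"
proof -
  have "cost_gap x / M \<le> norm x" using cost_gap_le[of x] M_pos by (simp add: divide_le_eq mult.commute)
  then have "\<alpha> (cost_gap x / M) \<le> norm (dJ (x + xs))"
    using class_K_mono[OF \<alpha>_class_K] cost_gap_nonneg[of x] M_pos \<alpha>_le_dJ[of "x + xs"]
    by (smt (verit) add_diff_cancel_right' divide_nonneg_pos)
  then have "(\<alpha> (cost_gap x / M))\<^sup>2 \<le> (norm (dJ (x + xs)))\<^sup>2"
    using class_K_nonneg[OF \<alpha>_class_K] cost_gap_nonneg[of x] M_pos by (intro power_mono) auto
  then show ?thesis unfolding decay_rate_def using \<kappa>3_less_\<gamma> by simp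
qed

end

section \<open>Averaging over one period of the dithers\<close>

locale es_trajectory = extremum_seeking +
  fixes \<epsilon> \<tau>0 :: real and X :: "real \<Rightarrow> 'a"
  assumes \<epsilon>_pos: "0 < \<epsilon>" and \<epsilon>_le_1: "\<epsilon> \<le> 1"
    and X_deriv: "\<And>t. t \<ge> 0 \<Longrightarrow>
      (X has_vector_derivative es_rhs b0 J xs r b \<omega> \<epsilon> (X t) (\<tau>0 + t / \<epsilon>\<^sup>2)) (at t within {0..})"
begin

definition phase :: "real \<Rightarrow> real" where
  "phase t = \<tau>0 + t / \<epsilon>\<^sup>2"

lemma has_vector_derivative_phase: "(phase has_vector_derivative 1 / \<epsilon>\<^sup>2) (at t within S)"
  unfolding phase_def[abs_def] by (rule has_vector_derivative_affine)

lemma has_vector_derivative_compose_phase: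
  assumes "\<And>\<theta>. (f has_vector_derivative f' \<theta>) (at \<theta>)"
  shows "((\<lambda>t. f (phase t)) has_vector_derivative (1 / \<epsilon>\<^sup>2) *\<^sub>R f' (phase t)) (at t within S)"
  using vector_diff_chain_within[OF has_vector_derivative_phase has_vector_derivative_at_within[OF assms]]
  by (simp add: o_def)

lemma X_deriv_on:
  assumes "0 \<le> t0" "t \<in> {t0..t1}"
  shows "(X has_vector_derivative es_rhs b0 J xs r b \<omega> \<epsilon> (X t) (phase t)) (at t within {t0..t1})"
  using has_vector_derivative_within_subset[OF X_deriv] assms unfolding phase_def by auto

lemma displacement_le:
  assumes "0 \<le> t0" "t0 \<le> t" "t \<le> t0 + \<epsilon>\<^sup>2 * T"
  shows "norm (X t - X t0) \<le> speed_bound * \<epsilon> * T"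
proof -
  have "norm (X t - X t0) \<le> (speed_bound / \<epsilon>) * (t - t0)"
    using norm_diff_le_of_vector_derivative_bound[OF assms(2) X_deriv_on[OF assms(1)]]
      norm_es_rhs_le[OF \<epsilon>_pos \<epsilon>_le_1] by blast
  also have "\<dots> \<le> (speed_bound / \<epsilon>) * (\<epsilon>\<^sup>2 * T)"
    using assms speed_bound_nonneg \<epsilon>_pos by (intro mult_left_mono) auto
  also have "\<dots> = speed_bound * \<epsilon> * T" using \<epsilon>_pos by (simp add: power2_eq_square)
  finally show ?thesis .
qed

text \<open>Subtracting the fast oscillation \<open>\<epsilon> H\<close>, where \<open>H\<close> integrates the dither, leaves an \<open>O(1)\<close> speed.\<close>
lemma corrected_displacement_le:
  assumes t0: "0 \<le> t0" and s: "t0 \<le> s" "s \<le> t0 + \<epsilon>\<^sup>2 * T"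
  shows "norm (X s - X t0 - \<epsilon> *\<^sub>R (dither_primitive (J (X t0 + xs)) (phase s)
      - dither_primitive (J (X t0 + xs)) (phase t0))) \<le> corrected_speed_bound T * (s - t0)"
proof -
  define y0 where "y0 = J (X t0 + xs)"
  define g where "g t = X t - \<epsilon> *\<^sub>R dither_primitive y0 (phase t)" for t
  define g' where "g' t = b0 (X t + xs)
      + (1 / \<epsilon>) *\<^sub>R (dither_sum (J (X t + xs)) (phase t) - dither_sum y0 (phase t))" for t
  have "norm (g s - g t0) \<le> corrected_speed_bound T * (s - t0)"
  proof (rule norm_diff_le_of_vector_derivative_bound[OF s(1)])
    fix t assume t: "t \<in> {t0..s}"
    have "(g has_vector_derivative es_rhs b0 J xs r b \<omega> \<epsilon> (X t) (phase t)
        - \<epsilon> *\<^sub>R ((1 / \<epsilon>\<^sup>2) *\<^sub>R dither_sum y0 (phase t))) (at t within {t0..s})"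
      unfolding g_def
      by (intro has_vector_derivative_diff X_deriv_on[OF t0 t] bounded_linear.has_vector_derivative[OF bounded_linear_scaleR_right]
          has_vector_derivative_compose_phase has_vector_derivative_dither_primitive)
    moreover have "es_rhs b0 J xs r b \<omega> \<epsilon> (X t) (phase t) - \<epsilon> *\<^sub>R ((1 / \<epsilon>\<^sup>2) *\<^sub>R dither_sum y0 (phase t)) = g' t"
      unfolding es_rhs_eq g'_def using \<epsilon>_pos by (simp add: power2_eq_square scaleR_diff_right)
    ultimately show "(g has_vector_derivative g' t) (at t within {t0..s})" by simp
    have "norm ((1 / \<epsilon>) *\<^sub>R (dither_sum (J (X t + xs)) (phase t) - dither_sum y0 (phase t)))
        \<le> (1 / \<epsilon>) * (dither_gain * (M * (speed_bound * \<epsilon> * T)))"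
      unfolding norm_scaleR abs_divide abs_one abs_of_pos[OF \<epsilon>_pos]
    proof (intro mult_left_mono)
      have "norm (dither_sum (J (X t + xs)) (phase t) - dither_sum y0 (phase t))
          \<le> dither_gain * \<bar>J (X t + xs) - y0\<bar>" by (rule dither_sum_lipschitz)
      also have "\<dots> \<le> dither_gain * (M * norm (X t - X t0))"
        unfolding y0_def using J_lipschitz[of "X t + xs" "X t0 + xs"] dither_gain_nonneg
        by (auto intro: mult_left_mono)
      also have "\<dots> \<le> dither_gain * (M * (speed_bound * \<epsilon> * T))"
        using displacement_le[OF t0, of t T] t s dither_gain_nonneg M_pos by (auto intro!: mult_left_mono)
      finally show "norm (dither_sum (J (X t + xs)) (phase t) - dither_sum y0 (phase t))
          \<le> dither_gain * (M * (speed_bound * \<epsilon> * T))" .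
    qed (use \<epsilon>_pos in simp)
    then have "norm (g' t) \<le> \<kappa>3 * M + (1 / \<epsilon>) * (dither_gain * (M * (speed_bound * \<epsilon> * T)))"
      unfolding g'_def using norm_b0_le[of "X t + xs"] by (intro order_trans[OF norm_triangle_ineq add_mono])
    also have "\<dots> = corrected_speed_bound T" unfolding corrected_speed_bound_def using \<epsilon>_pos by simp
    finally show "norm (g' t) \<le> corrected_speed_bound T" .
  qed
  moreover have "g s - g t0 = X s - X t0 - \<epsilon> *\<^sub>R (dither_primitive y0 (phase s) - dither_primitive y0 (phase t0))"
    unfolding g_def by (simp add: scaleR_diff_right algebra_simps)
  ultimately show ?thesis unfolding y0_def by simp
qed

text \<open>Along the gradient \<open>g0\<close> at the start of a period, the deviation of \<open>X\<close> from the averaged motion: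
  the fast oscillation \<open>\<epsilon> H\<close>, the drift \<open>b0\<close> and the Lie-bracket drift (whose primitive is \<open>R\<close>) are removed.\<close>
definition averaging_error :: "(real \<Rightarrow> real) \<Rightarrow> real \<Rightarrow> real \<Rightarrow> real" where
  "averaging_error R t0 t = dJ (X t0 + xs) \<bullet> (X t - X t0
      - \<epsilon> *\<^sub>R (dither_primitive (J (X t0 + xs)) (phase t) - dither_primitive (J (X t0 + xs)) (phase t0))
      - (t - t0) *\<^sub>R b0 (X t0 + xs))
    - \<epsilon>\<^sup>2 * (R (phase t) - R (phase t0))"

definition averaging_error_rate :: "real \<Rightarrow> real \<Rightarrow> real" where
  "averaging_error_rate t0 t = dJ (X t0 + xs) \<bullet> (b0 (X t + xs) - b0 (X t0 + xs))
    + (1 / \<epsilon>) * (\<Sum>i\<in>{1..r}. \<Sum>j\<in>{1,2}. (dJ (X t0 + xs) \<bullet> b i j) *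
        (dither \<omega> i j (J (X t + xs)) (phase t) - dither \<omega> i j (J (X t0 + xs)) (phase t)
         - dither_dy \<omega> i j (J (X t0 + xs)) (phase t) * (\<epsilon> * (dJ (X t0 + xs) \<bullet>
             (dither_primitive (J (X t0 + xs)) (phase t) - dither_primitive (J (X t0 + xs)) (phase t0))))))"

lemma averaging_error_rate_eq:
  "averaging_error_rate t0 t = dJ (X t0 + xs) \<bullet> (b0 (X t + xs) - b0 (X t0 + xs))
    + (1 / \<epsilon>) * (dJ (X t0 + xs) \<bullet> (dither_sum (J (X t + xs)) (phase t) - dither_sum (J (X t0 + xs)) (phase t)))
    - bracket_term (J (X t0 + xs)) (dJ (X t0 + xs)) (phase t0) (phase t)"
proof -
  define y0 where "y0 = J (X t0 + xs)"
  define g0 where "g0 = dJ (X t0 + xs)"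
  define h where "h = g0 \<bullet> (dither_primitive y0 (phase t) - dither_primitive y0 (phase t0))"
  have inner_dither_sum: "g0 \<bullet> dither_sum y \<theta> = (\<Sum>i\<in>{1..r}. \<Sum>j\<in>{1,2}. (g0 \<bullet> b i j) * dither \<omega> i j y \<theta>)"
    for y \<theta> unfolding dither_sum_def by (simp add: inner_sum_right inner_add_right mult.commute)
  have "g0 \<bullet> (dither_sum (J (X t + xs)) (phase t) - dither_sum y0 (phase t))
        - \<epsilon> * bracket_term y0 g0 (phase t0) (phase t)
      = (\<Sum>i\<in>{1..r}. (\<Sum>j\<in>{1,2}. (g0 \<bullet> b i j) * dither \<omega> i j (J (X t + xs)) (phase t))
          - (\<Sum>j\<in>{1,2}. (g0 \<bullet> b i j) * dither \<omega> i j y0 (phase t))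
          - \<epsilon> * (\<Sum>j\<in>{1,2}. dither_dy \<omega> i j y0 (phase t) * h * (g0 \<bullet> b i j)))"
    unfolding inner_diff_right inner_dither_sum bracket_term_def h_def by (simp only: sum_subtractf sum_distrib_left)
  also have "\<dots> = (\<Sum>i\<in>{1..r}. \<Sum>j\<in>{1,2}. (g0 \<bullet> b i j) * (dither \<omega> i j (J (X t + xs)) (phase t)
        - dither \<omega> i j y0 (phase t) - dither_dy \<omega> i j y0 (phase t) * (\<epsilon> * h)))"
    by (intro sum.cong refl) (simp add: algebra_simps)
  finally show ?thesis
    unfolding averaging_error_rate_def y0_def[symmetric] g0_def[symmetric] h_def[symmetric] using \<epsilon>_pos
    by (simp add: field_simps)
qed

lemma has_vector_derivative_averaging_error:
  assumes R: "\<And>\<theta>. (R has_real_derivative bracket_term (J (X t0 + xs)) (dJ (X t0 + xs)) (phase t0) \<theta>) (at \<theta>)"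
    and t0: "0 \<le> t0" and t: "t \<in> {t0..t1}"
  shows "(averaging_error R t0 has_vector_derivative averaging_error_rate t0 t) (at t within {t0..t1})"
proof -
  define y0 where "y0 = J (X t0 + xs)"
  define g0 where "g0 = dJ (X t0 + xs)"
  define H where "H = dither_primitive y0"
  have lin: "((\<lambda>t. (t - t0) *\<^sub>R b0 (X t0 + xs)) has_vector_derivative b0 (X t0 + xs)) (at t within {t0..t1})"
    by (auto intro!: derivative_eq_intros)
  have "((\<lambda>t. X t - X t0 - \<epsilon> *\<^sub>R (H (phase t) - H (phase t0)) - (t - t0) *\<^sub>R b0 (X t0 + xs))
      has_vector_derivative es_rhs b0 J xs r b \<omega> \<epsilon> (X t) (phase t) - 0
        - \<epsilon> *\<^sub>R ((1 / \<epsilon>\<^sup>2) *\<^sub>R dither_sum y0 (phase t) - 0) - b0 (X t0 + xs)) (at t within {t0..t1})"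
    unfolding H_def
    by (intro has_vector_derivative_diff has_vector_derivative_const X_deriv_on[OF t0 t] lin
        bounded_linear.has_vector_derivative[OF bounded_linear_scaleR_right]
        has_vector_derivative_compose_phase has_vector_derivative_dither_primitive)
  from bounded_linear.has_vector_derivative[OF bounded_linear_inner_right this, of g0]
  have "((\<lambda>t. g0 \<bullet> (X t - X t0 - \<epsilon> *\<^sub>R (H (phase t) - H (phase t0)) - (t - t0) *\<^sub>R b0 (X t0 + xs))
      - \<epsilon>\<^sup>2 * (R (phase t) - R (phase t0))) has_vector_derivative
      g0 \<bullet> (es_rhs b0 J xs r b \<omega> \<epsilon> (X t) (phase t) - 0
        - \<epsilon> *\<^sub>R ((1 / \<epsilon>\<^sup>2) *\<^sub>R dither_sum y0 (phase t) - 0) - b0 (X t0 + xs))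
      - \<epsilon>\<^sup>2 * ((1 / \<epsilon>\<^sup>2) *\<^sub>R bracket_term y0 g0 (phase t0) (phase t) - 0)) (at t within {t0..t1})"
    using R unfolding y0_def g0_def has_real_derivative_iff_has_vector_derivative
    by (intro has_vector_derivative_diff has_vector_derivative_const has_vector_derivative_mult_right
        has_vector_derivative_compose_phase)
  moreover have "g0 \<bullet> (es_rhs b0 J xs r b \<omega> \<epsilon> (X t) (phase t) - 0
        - \<epsilon> *\<^sub>R ((1 / \<epsilon>\<^sup>2) *\<^sub>R dither_sum y0 (phase t) - 0) - b0 (X t0 + xs))
      - \<epsilon>\<^sup>2 * ((1 / \<epsilon>\<^sup>2) *\<^sub>R bracket_term y0 g0 (phase t0) (phase t) - 0) = averaging_error_rate t0 t"
    unfolding averaging_error_rate_eq es_rhs_eq y0_def[symmetric] g0_def[symmetric] using \<epsilon>_pos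
    by (simp add: inner_add_right inner_diff_right power2_eq_square field_simps)
  ultimately show ?thesis
    unfolding averaging_error_def[abs_def] y0_def[symmetric] g0_def[symmetric] H_def[symmetric] by simp
qed

lemma
  assumes t0: "0 \<le> t0" and t: "t0 \<le> t" "t \<le> t0 + \<epsilon>\<^sup>2 * T" and T: "T \<ge> 0"
  shows cost_increment_sq_le: "(J (X t + xs) - J (X t0 + xs))\<^sup>2 \<le> M\<^sup>2 * (speed_bound * \<epsilon> * T)\<^sup>2"
    and cost_increment_along_oscillation:
      "\<bar>J (X t + xs) - J (X t0 + xs) - \<epsilon> * (dJ (X t0 + xs) \<bullet>
          (dither_primitive (J (X t0 + xs)) (phase t) - dither_primitive (J (X t0 + xs)) (phase t0)))\<bar>
        \<le> LJ * (speed_bound * \<epsilon> * T)\<^sup>2 + M * (corrected_speed_bound T * (\<epsilon>\<^sup>2 * T))"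
proof -
  define g0 where "g0 = dJ (X t0 + xs)"
  define \<Delta> where "\<Delta> = X t - X t0"
  define d where "d = speed_bound * \<epsilon> * T"
  have d: "norm \<Delta> \<le> d" unfolding d_def \<Delta>_def by (rule displacement_le[OF t0 t])
  have "\<bar>J (X t + xs) - J (X t0 + xs)\<bar> \<le> M * norm \<Delta>"
    using J_lipschitz[of "X t + xs" "X t0 + xs"] by (simp add: \<Delta>_def)
  also have "\<dots> \<le> M * d" using d M_pos by (intro mult_left_mono) auto
  finally show "(J (X t + xs) - J (X t0 + xs))\<^sup>2 \<le> M\<^sup>2 * (speed_bound * \<epsilon> * T)\<^sup>2"
    using power_mono[of "\<bar>J (X t + xs) - J (X t0 + xs)\<bar>" "M * d" 2] by (simp add: power_mult_distrib d_def)
  have "norm (\<Delta> - \<epsilon> *\<^sub>R (dither_primitive (J (X t0 + xs)) (phase t) - dither_primitive (J (X t0 + xs)) (phase t0)))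
      \<le> corrected_speed_bound T * (\<epsilon>\<^sup>2 * T)"
    using corrected_displacement_le[OF t0 t] t corrected_speed_bound_nonneg[OF T]
    unfolding \<Delta>_def by (smt (verit) mult_left_mono)
  then have "\<bar>g0 \<bullet> (\<Delta> - \<epsilon> *\<^sub>R (dither_primitive (J (X t0 + xs)) (phase t)
      - dither_primitive (J (X t0 + xs)) (phase t0)))\<bar> \<le> M * (corrected_speed_bound T * (\<epsilon>\<^sup>2 * T))"
    using Cauchy_Schwarz_ineq2 dJ_bounded[of "X t0 + xs"] unfolding g0_def
    by (smt (verit, best) mult_mono norm_ge_zero)
  moreover have "\<bar>J (X t + xs) - J (X t0 + xs) - g0 \<bullet> \<Delta>\<bar> \<le> LJ * d\<^sup>2"
    using J_taylor[of "X t + xs" "X t0 + xs"] mult_left_mono[OF power_mono[OF d, of 2] LJ_nonneg]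
    unfolding g0_def \<Delta>_def by simp
  ultimately show "\<bar>J (X t + xs) - J (X t0 + xs) - \<epsilon> * (dJ (X t0 + xs) \<bullet>
      (dither_primitive (J (X t0 + xs)) (phase t) - dither_primitive (J (X t0 + xs)) (phase t0)))\<bar>
      \<le> LJ * (speed_bound * \<epsilon> * T)\<^sup>2 + M * (corrected_speed_bound T * (\<epsilon>\<^sup>2 * T))"
    unfolding g0_def[symmetric] d_def[symmetric] by (simp add: inner_diff_right algebra_simps)
qed

lemma abs_averaging_error_rate_le:
  assumes t0: "0 \<le> t0" and t: "t0 \<le> t" "t \<le> t0 + \<epsilon>\<^sup>2 * T" and T: "T \<ge> 0"
  shows "\<bar>averaging_error_rate t0 t\<bar> \<le> \<epsilon> * averaging_rate_bound T"
proof -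
  define g0 where "g0 = dJ (X t0 + xs)"
  define d where "d = speed_bound * \<epsilon> * T"
  have "norm g0 \<le> M" unfolding g0_def by (rule dJ_bounded)
  have drift: "\<bar>g0 \<bullet> (b0 (X t + xs) - b0 (X t0 + xs))\<bar> \<le> M * L0 * speed_bound * T * \<epsilon>"
  proof -
    have "\<bar>g0 \<bullet> (b0 (X t + xs) - b0 (X t0 + xs))\<bar> \<le> norm g0 * norm (b0 (X t + xs) - b0 (X t0 + xs))"
      by (rule Cauchy_Schwarz_ineq2)
    also have "\<dots> \<le> M * (L0 * d)"
      using b0_lipschitz[of "X t + xs" "X t0 + xs"] mult_left_mono[OF displacement_le[OF t0 t] L0_nonneg]
        \<open>norm g0 \<le> M\<close> M_pos
      by (intro mult_mono) (auto simp: d_def)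
    finally show ?thesis unfolding d_def by (simp add: algebra_simps)
  qed
  have "\<bar>averaging_error_rate t0 t\<bar> \<le> M * L0 * speed_bound * T * \<epsilon>
      + (1 / \<epsilon>) * (M * dither_gain * (M\<^sup>2 * d\<^sup>2 + (LJ * d\<^sup>2 + M * (corrected_speed_bound T * (\<epsilon>\<^sup>2 * T)))))"
    unfolding averaging_error_rate_def g0_def[symmetric]
  proof (rule order_trans[OF abs_triangle_ineq add_mono[OF drift]])
    show "\<bar>(1 / \<epsilon>) * (\<Sum>i\<in>{1..r}. \<Sum>j\<in>{1,2}. (g0 \<bullet> b i j) *
          (dither \<omega> i j (J (X t + xs)) (phase t) - dither \<omega> i j (J (X t0 + xs)) (phase t)
           - dither_dy \<omega> i j (J (X t0 + xs)) (phase t) * (\<epsilon> * (g0 \<bullet>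
             (dither_primitive (J (X t0 + xs)) (phase t) - dither_primitive (J (X t0 + xs)) (phase t0))))))\<bar>
        \<le> (1 / \<epsilon>) * (M * dither_gain * (M\<^sup>2 * d\<^sup>2 + (LJ * d\<^sup>2 + M * (corrected_speed_bound T * (\<epsilon>\<^sup>2 * T)))))"
      unfolding abs_mult abs_divide abs_one abs_of_pos[OF \<epsilon>_pos] using \<epsilon>_pos
      by (intro mult_left_mono order_trans[OF bracket_remainder_bound[OF \<open>norm g0 \<le> M\<close>]])
        (use cost_increment_sq_le[OF t0 t T] cost_increment_along_oscillation[OF t0 t T] M_pos dither_gain_nonneg
          in \<open>auto simp: g0_def d_def intro!: mult_left_mono add_mono\<close>)
  qed
  also have "\<dots> = \<epsilon> * averaging_rate_bound T"
    unfolding averaging_rate_bound_def d_def using \<epsilon>_pos by (simp add: power2_eq_square field_simps)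
  finally show ?thesis .
qed

lemma gradient_increment_over_period:
  assumes T: "T > 0" "\<forall>i\<in>{1..r}. trig_period (\<omega> i) T" and t0: "0 \<le> t0"
  shows "dJ (X t0 + xs) \<bullet> (X (t0 + \<epsilon>\<^sup>2 * T) - X t0)
    \<le> \<epsilon>\<^sup>2 * T * (\<epsilon> * averaging_rate_bound T - (\<gamma> - \<kappa>3) * (norm (dJ (X t0 + xs)))\<^sup>2)"
proof -
  define P where "P = \<epsilon>\<^sup>2 * T"
  define y0 where "y0 = J (X t0 + xs)"
  define g0 where "g0 = dJ (X t0 + xs)"
  define S2 where "S2 = (\<Sum>i\<in>{1..r}. \<Sum>j\<in>{1,2}. (g0 \<bullet> b i j)\<^sup>2)"
  have "P > 0" unfolding P_def using T \<epsilon>_pos by simp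
  have end_phase: "phase (t0 + P) = phase t0 + T" unfolding phase_def P_def using \<epsilon>_pos by (simp add: field_simps)
  obtain R where R: "\<And>\<theta>. (R has_real_derivative bracket_term y0 g0 (phase t0) \<theta>) (at \<theta>)"
    and R_increment: "R (phase t0 + T) - R (phase t0) = - T * S2"
    using bracket_term_primitive[OF T(2)] unfolding S2_def by metis
  have "\<bar>averaging_error R t0 (t0 + P) - averaging_error R t0 t0\<bar> \<le> (\<epsilon> * averaging_rate_bound T) * (t0 + P - t0)"
    using norm_diff_le_of_vector_derivative_bound[of t0 "t0 + P" "averaging_error R t0" "averaging_error_rate t0"]
      has_vector_derivative_averaging_error[OF R[unfolded y0_def g0_def] t0]
      abs_averaging_error_rate_le[OF t0 _ _ less_imp_le[OF T(1)]] \<open>P > 0\<close>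
    unfolding P_def by auto
  moreover have "averaging_error R t0 t0 = 0" by (simp add: averaging_error_def)
  moreover have "averaging_error R t0 (t0 + P) = g0 \<bullet> (X (t0 + P) - X t0) - P * (g0 \<bullet> b0 (X t0 + xs)) + P * S2"
    unfolding averaging_error_def end_phase dither_primitive_periodic[OF T(2)] R_increment
    by (simp add: P_def g0_def inner_diff_right algebra_simps)
  ultimately have "g0 \<bullet> (X (t0 + P) - X t0) \<le> P * (\<epsilon> * averaging_rate_bound T) + P * (g0 \<bullet> b0 (X t0 + xs)) - P * S2"
    by (simp add: algebra_simps)
  moreover have "g0 \<bullet> b0 (X t0 + xs) \<le> \<kappa>3 * (norm g0)\<^sup>2"
  proof -
    have "g0 \<bullet> b0 (X t0 + xs) \<le> norm g0 * norm (b0 (X t0 + xs))" by (rule norm_cauchy_schwarz)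
    also have "\<dots> \<le> norm g0 * (\<kappa>3 * norm g0)" unfolding g0_def by (intro mult_left_mono b0_bounded) auto
    finally show ?thesis by (simp add: power2_eq_square algebra_simps)
  qed
  moreover have "\<gamma> * (norm g0)\<^sup>2 \<le> S2" unfolding S2_def using excitation[of g0] by (simp add: inner_commute)
  ultimately have "g0 \<bullet> (X (t0 + P) - X t0) \<le> P * (\<epsilon> * averaging_rate_bound T) + P * (\<kappa>3 * (norm g0)\<^sup>2) - P * (\<gamma> * (norm g0)\<^sup>2)"
    using \<open>P > 0\<close> by (smt (verit) mult_left_mono)
  then show ?thesis unfolding P_def g0_def by (simp add: algebra_simps)
qed

theorem cost_decrease_over_period:
  assumes T: "T > 0" "\<forall>i\<in>{1..r}. trig_period (\<omega> i) T" and t0: "0 \<le> t0"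
  shows "J (X (t0 + \<epsilon>\<^sup>2 * T) + xs) - J (X t0 + xs)
    \<le> \<epsilon>\<^sup>2 * T * (\<epsilon> * period_error_bound T - (\<gamma> - \<kappa>3) * (norm (dJ (X t0 + xs)))\<^sup>2)"
proof -
  define P where "P = \<epsilon>\<^sup>2 * T"
  define \<Delta> where "\<Delta> = X (t0 + P) - X t0"
  have "P > 0" unfolding P_def using T \<epsilon>_pos by simp
  have "phase (t0 + P) = phase t0 + T" unfolding phase_def P_def using \<epsilon>_pos by (simp add: field_simps)
  then have "norm \<Delta> \<le> corrected_speed_bound T * P"
    using corrected_displacement_le[OF t0, of "t0 + P" T] \<open>P > 0\<close>
    unfolding \<Delta>_def P_def by (simp add: dither_primitive_periodic[OF T(2)])
  then have "LJ * (norm \<Delta>)\<^sup>2 \<le> LJ * (corrected_speed_bound T * P)\<^sup>2"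
    using LJ_nonneg by (intro mult_left_mono power_mono) auto
  also have "\<dots> = P * (LJ * (corrected_speed_bound T)\<^sup>2 * T * \<epsilon>\<^sup>2)"
    unfolding P_def by (simp add: power2_eq_square)
  also have "\<dots> \<le> P * (LJ * (corrected_speed_bound T)\<^sup>2 * T * \<epsilon>)"
    using \<open>P > 0\<close> \<epsilon>_pos \<epsilon>_le_1 LJ_nonneg T(1)
    by (intro mult_left_mono) (auto simp: power2_eq_square mult_left_le)
  finally have "J (X (t0 + P) + xs) - J (X t0 + xs) \<le> dJ (X t0 + xs) \<bullet> \<Delta> + P * (LJ * (corrected_speed_bound T)\<^sup>2 * T * \<epsilon>)"
    using J_taylor[of "X (t0 + P) + xs" "X t0 + xs"] unfolding \<Delta>_def by simp
  then show ?thesis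
    using gradient_increment_over_period[OF T t0] unfolding P_def[symmetric] \<Delta>_def[symmetric] period_error_bound_def
    by (simp add: algebra_simps)
qed

lemma cost_gap_sampled_decrease:
  assumes T: "T > 0" "\<forall>i\<in>{1..r}. trig_period (\<omega> i) T" and t: "t \<ge> 0"
  shows "cost_gap (X (t + \<epsilon>\<^sup>2 * T)) \<le> cost_gap (X t) - \<epsilon>\<^sup>2 * T * decay_rate (cost_gap (X t))
    + \<epsilon>\<^sup>2 * T * (period_error_bound T * \<epsilon>)"
proof -
  have "\<epsilon>\<^sup>2 * T * decay_rate (cost_gap (X t)) \<le> \<epsilon>\<^sup>2 * T * ((\<gamma> - \<kappa>3) * (norm (dJ (X t + xs)))\<^sup>2)"
    using decay_rate_cost_gap_le T(1) by (intro mult_left_mono) auto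
  then show ?thesis using cost_decrease_over_period[OF T t] unfolding cost_gap_def by (simp add: algebra_simps)
qed

lemma cost_gap_within_period:
  assumes "0 \<le> t0" "t0 \<le> t" "t \<le> t0 + \<epsilon>\<^sup>2 * T"
  shows "cost_gap (X t) \<le> cost_gap (X t0) + M * speed_bound * \<epsilon> * T"
  using cost_gap_lipschitz[of "X t" "X t0"] mult_left_mono[OF displacement_le[OF assms] less_imp_le[OF M_pos]]
  by (simp add: mult_ac)

theorem cost_gap_comparison:
  assumes T: "T > 0" "\<forall>i\<in>{1..r}. trig_period (\<omega> i) T" and t: "t \<ge> 0"
    and \<delta>: "\<delta> > 0" "2 * (period_error_bound T * \<epsilon>) \<le> decay_rate \<delta>"
  shows "cost_gap (X t) \<le> max \<delta> (comparison_level decay_rate M (norm (X 0)) t) + \<epsilon> * comparison_offset T"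
proof -
  define P where "P = \<epsilon>\<^sup>2 * T"
  have "P > 0" "P \<le> \<epsilon> * T"
    unfolding P_def using T(1) \<epsilon>_pos \<epsilon>_le_1 by (auto simp: power2_eq_square mult_left_le)
  have "cost_gap (X t) \<le> max \<delta> (class_K_inv decay_rate (decay_level decay_rate (M * norm (X 0)) t))
      + P * ((\<gamma> - \<kappa>3) * M\<^sup>2) / 2 + P * (period_error_bound T * \<epsilon>) + M * speed_bound * \<epsilon> * T"
    by (rule sampled_comparison[OF \<open>P > 0\<close> class_K_decay_rate decay_rate_le cost_gap_nonneg _ _ \<delta>])
      (use cost_gap_sampled_decrease[OF T] cost_gap_within_period cost_gap_le[of "X 0"]
        period_error_bound_nonneg[of T] T(1) \<epsilon>_pos t in \<open>auto simp: P_def\<close>)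
  moreover have "P * ((\<gamma> - \<kappa>3) * M\<^sup>2) / 2 + P * (period_error_bound T * \<epsilon>)
      \<le> \<epsilon> * T * ((\<gamma> - \<kappa>3) * M\<^sup>2) / 2 + \<epsilon> * T * period_error_bound T"
    using \<open>P \<le> \<epsilon> * T\<close> \<open>P > 0\<close> \<kappa>3_less_\<gamma> period_error_bound_nonneg[of T] T(1) \<epsilon>_pos \<epsilon>_le_1
    by (intro add_mono divide_right_mono mult_mono) (auto simp: mult_left_le)
  ultimately show ?thesis by (simp add: comparison_level_def comparison_offset_def algebra_simps)
qed

lemma norm_le_practical_bound:
  assumes G: "class_K G" "\<And>x. norm x \<le> G (cost_gap x)"
    and T: "T > 0" "\<forall>i\<in>{1..r}. trig_period (\<omega> i) T" and t: "t \<ge> 0"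
    and \<delta>: "\<delta> > 0" "2 * (period_error_bound T * \<epsilon>) \<le> decay_rate \<delta>"
  shows "norm (X t) \<le> max (G (2 * comparison_level decay_rate M (norm (X 0)) t))
    (G (2 * max \<delta> (\<epsilon> * comparison_offset T)))"
proof -
  define w where "w = comparison_level decay_rate M (norm (X 0)) t"
  have "w \<ge> 0" unfolding w_def using comparison_level_nonneg[OF class_K_decay_rate M_pos] t by simp
  have "norm (X t) \<le> G (cost_gap (X t))" by (rule G(2))
  also have "\<dots> \<le> G (max \<delta> w + \<epsilon> * comparison_offset T)"
    using cost_gap_comparison[OF T t \<delta>] cost_gap_nonneg unfolding w_def by (intro class_K_mono[OF G(1)]) auto
  also have "\<dots> \<le> max (G (2 * w)) (G (2 * max \<delta> (\<epsilon> * comparison_offset T)))"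
    using \<open>w \<ge> 0\<close> \<delta>(1) comparison_offset_nonneg[of T] T(1) \<epsilon>_pos
    by (intro class_K_max_add_le[OF G(1)]) auto
  finally show ?thesis unfolding w_def .
qed

end

section \<open>Practical asymptotic stability\<close>

lemma dom_ts_convex: "convex (dom_ts ts)"
  by (rule is_interval_convex) (auto simp: is_interval_1 dom_ts_def intro: le_less_trans[of _ "ereal _"])

lemma dom_ts_subset: "t \<in> dom_ts ts \<Longrightarrow> {0..t} \<subseteq> dom_ts ts"
  by (auto simp: dom_ts_def intro: le_less_trans[of _ "ereal t"])

lemma dom_ts_infinity [simp]: "dom_ts \<infinity> = {0..}"
  by (auto simp: dom_ts_def)

lemma zero_in_dom_ts: "ts > 0 \<Longrightarrow> 0 \<in> dom_ts ts"
  by (auto simp: dom_ts_def zero_ereal_def)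

context extremum_seeking
begin

lemma es_solution_phase:
  assumes sol: "es_solution b0 J xs r b \<omega> \<epsilon> x0 \<tau>0 ts X T" and t: "t \<in> dom_ts ts"
  shows "T t = \<tau>0 + t / \<epsilon>\<^sup>2"
proof -
  have "ts > 0" "T 0 = \<tau>0" using sol by (auto simp: es_solution_def)
  have "\<exists>c. \<forall>s\<in>dom_ts ts. T s - s / \<epsilon>\<^sup>2 = c"
  proof (rule has_derivative_zero_constant[OF dom_ts_convex])
    fix s assume "s \<in> dom_ts ts"
    then have "(T has_vector_derivative 1 / \<epsilon>\<^sup>2) (at s within dom_ts ts)"
      using sol by (auto simp: es_solution_def)
    from has_vector_derivative_diff[OF this has_vector_derivative_affine[of 0 "\<epsilon>\<^sup>2"]]
    have "((\<lambda>s. T s - s / \<epsilon>\<^sup>2) has_vector_derivative 1 / \<epsilon>\<^sup>2 - 1 / \<epsilon>\<^sup>2) (at s within dom_ts ts)"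
      by simp
    then show "((\<lambda>s. T s - s / \<epsilon>\<^sup>2) has_derivative (\<lambda>h. 0)) (at s within dom_ts ts)"
      by (simp add: has_vector_derivative_def)
  qed
  then obtain c where c: "\<And>s. s \<in> dom_ts ts \<Longrightarrow> T s - s / \<epsilon>\<^sup>2 = c" by blast
  have "c = \<tau>0" using c[OF zero_in_dom_ts[OF \<open>ts > 0\<close>]] \<open>T 0 = \<tau>0\<close> by simp
  then show ?thesis using c[OF t] by simp
qed

lemma es_solution_exists:
  assumes \<epsilon>: "0 < \<epsilon>" "\<epsilon> \<le> 1"
  obtains Y where "es_solution b0 J xs r b \<omega> \<epsilon> x0 \<tau>0 \<infinity> Y (\<lambda>t. \<tau>0 + t / \<epsilon>\<^sup>2)"
proof -
  define f where "f t x = es_rhs b0 J xs r b \<omega> \<epsilon> x (\<tau>0 + t / \<epsilon>\<^sup>2)" for t x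
  have lipschitz: "norm (f t x - f t y) \<le> (L0 + dither_gain * M / \<epsilon>) * norm (x - y)" for t x y
    unfolding f_def by (rule es_rhs_lipschitz[OF \<epsilon>(1)])
  have bounded: "norm (f t x) \<le> speed_bound / \<epsilon>" for t x
    unfolding f_def by (rule norm_es_rhs_le[OF \<epsilon>])
  have phase_cont: "continuous_on S (\<lambda>t. \<tau>0 + t / \<epsilon>\<^sup>2)" for S
    using \<epsilon>(1) by (intro continuous_on_add continuous_on_const continuous_on_divide continuous_on_id) auto
  have "continuous_on UNIV (\<lambda>p::real \<times> 'a. es_rhs b0 J xs r b \<omega> \<epsilon> (snd p) (\<tau>0 + fst p / \<epsilon>\<^sup>2))"
    using continuous_on_compose2[OF phase_cont continuous_on_fst[OF continuous_on_id]]
    by (intro continuous_on_es_rhs continuous_on_snd[OF continuous_on_id]) auto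
  then have cont: "continuous_on UNIV (\<lambda>(t, x). f t x)" unfolding f_def case_prod_beta .
  have "L0 + dither_gain * M / \<epsilon> \<ge> 0" using L0_nonneg dither_gain_nonneg M_pos \<epsilon>(1) by simp
  then obtain Y where Y0: "Y 0 = x0"
    and Y_deriv: "\<And>t. t \<ge> 0 \<Longrightarrow> (Y has_vector_derivative f t (Y t)) (at t within {0..})"
    using ode_global_existence[OF cont lipschitz _ bounded, of x0] by blast
  have "es_solution b0 J xs r b \<omega> \<epsilon> x0 \<tau>0 \<infinity> Y (\<lambda>t. \<tau>0 + t / \<epsilon>\<^sup>2)"
    unfolding es_solution_def dom_ts_infinity
  proof (intro conjI ballI)
    have "continuous_on {0..} Y"
      using Y_deriv by (auto simp: continuous_on_eq_continuous_within intro: has_vector_derivative_continuous)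
    then show "continuous_on {0..} (\<lambda>t. es_rhs b0 J xs r b \<omega> \<epsilon> (Y t) (\<tau>0 + t / \<epsilon>\<^sup>2))"
      by (intro continuous_on_es_rhs phase_cont)
    show "(Y has_vector_derivative es_rhs b0 J xs r b \<omega> \<epsilon> (Y t) (\<tau>0 + t / \<epsilon>\<^sup>2)) (at t within {0..})"
      if "t \<in> {0..}" for t
      using Y_deriv that unfolding f_def by auto
    show "((\<lambda>t. \<tau>0 + t / \<epsilon>\<^sup>2) has_vector_derivative 1 / \<epsilon>\<^sup>2) (at t within {0..})" for t
      by (rule has_vector_derivative_affine)
  qed (use Y0 in auto)
  then show ?thesis by (rule that)
qed

lemma es_solutions_agree:
  assumes \<epsilon>: "0 < \<epsilon>" and Y: "es_solution b0 J xs r b \<omega> \<epsilon> x0 \<tau>0 \<infinity> Y (\<lambda>t. \<tau>0 + t / \<epsilon>\<^sup>2)"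
    and X: "es_solution b0 J xs r b \<omega> \<epsilon> x0 \<tau>0 ts X T" and t: "t \<in> dom_ts ts"
  shows "Y t = X t"
proof (rule ode_solution_unique[of t Y X "\<lambda>t x. es_rhs b0 J xs r b \<omega> \<epsilon> x (\<tau>0 + t / \<epsilon>\<^sup>2)"])
  show "0 \<le> t" "Y 0 = X 0" using t X Y by (auto simp: dom_ts_def es_solution_def)
  show "norm (es_rhs b0 J xs r b \<omega> \<epsilon> x (\<tau>0 + s / \<epsilon>\<^sup>2) - es_rhs b0 J xs r b \<omega> \<epsilon> y (\<tau>0 + s / \<epsilon>\<^sup>2))
      \<le> (L0 + dither_gain * M / \<epsilon>) * norm (x - y)" for s x y
    by (rule es_rhs_lipschitz[OF \<epsilon>])
  fix s assume s: "s \<in> {0..t}"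
  show "(Y has_vector_derivative es_rhs b0 J xs r b \<omega> \<epsilon> (Y s) (\<tau>0 + s / \<epsilon>\<^sup>2)) (at s within {0..t})"
    using Y s by (auto simp: es_solution_def intro: has_vector_derivative_within_subset)
  have "s \<in> dom_ts ts" using dom_ts_subset[OF t] s by auto
  then have "(X has_vector_derivative es_rhs b0 J xs r b \<omega> \<epsilon> (X s) (\<tau>0 + s / \<epsilon>\<^sup>2)) (at s within dom_ts ts)"
    using X es_solution_phase[OF X] unfolding es_solution_def by auto
  then show "(X has_vector_derivative es_rhs b0 J xs r b \<omega> \<epsilon> (X s) (\<tau>0 + s / \<epsilon>\<^sup>2)) (at s within {0..t})"
    by (rule has_vector_derivative_within_subset) (rule dom_ts_subset[OF t])
qed

lemma es_solution_extends:
  assumes \<epsilon>: "0 < \<epsilon>" "\<epsilon> \<le> 1" and sol: "es_solution b0 J xs r b \<omega> \<epsilon> x0 \<tau>0 ts X T"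
  obtains Y where "es_solution b0 J xs r b \<omega> \<epsilon> x0 \<tau>0 \<infinity> Y (\<lambda>t. \<tau>0 + t / \<epsilon>\<^sup>2)"
    and "\<And>t. t \<in> dom_ts ts \<Longrightarrow> Y t = X t"
  using es_solution_exists[OF \<epsilon>] es_solutions_agree[OF \<epsilon>(1) _ sol] by metis

lemma es_trajectory_of_solution:
  assumes "0 < \<epsilon>" "\<epsilon> \<le> 1" "es_solution b0 J xs r b \<omega> \<epsilon> x0 \<tau>0 \<infinity> Y (\<lambda>t. \<tau>0 + t / \<epsilon>\<^sup>2)"
  shows "es_trajectory b0 J dJ xs r b \<omega> \<gamma> \<kappa>3 M LJ L0 \<alpha> \<epsilon> \<tau>0 Y"
  using assms by unfold_locales (auto simp: es_solution_def)

lemma es_solution_practical_bound: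
  assumes G: "class_K G" "\<And>x. norm x \<le> G (cost_gap x)"
    and T: "T > 0" "\<forall>i\<in>{1..r}. trig_period (\<omega> i) T" and \<epsilon>: "0 < \<epsilon>" "\<epsilon> \<le> 1"
    and \<delta>: "\<delta> > 0" "2 * (period_error_bound T * \<epsilon>) \<le> decay_rate \<delta>"
    and sol: "es_solution b0 J xs r b \<omega> \<epsilon> x0 \<tau>0 ts X \<tau>" and t: "t \<in> dom_ts ts"
  shows "norm (X t) \<le> max (G (2 * comparison_level decay_rate M (norm x0) t))
    (G (2 * max \<delta> (\<epsilon> * comparison_offset T)))"
proof -
  obtain Y where Y_sol: "es_solution b0 J xs r b \<omega> \<epsilon> x0 \<tau>0 \<infinity> Y (\<lambda>t. \<tau>0 + t / \<epsilon>\<^sup>2)"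
    and Y_X: "\<And>t. t \<in> dom_ts ts \<Longrightarrow> Y t = X t"
    using es_solution_extends[OF \<epsilon> sol] by metis
  interpret Y: es_trajectory b0 J dJ xs r b \<omega> \<gamma> \<kappa>3 M LJ L0 \<alpha> \<epsilon> \<tau>0 Y
    by (rule es_trajectory_of_solution[OF \<epsilon> Y_sol])
  have "t \<ge> 0" "Y 0 = x0" using t Y_sol by (simp_all add: dom_ts_def es_solution_def)
  with Y.norm_le_practical_bound[OF G T _ \<delta>] show ?thesis unfolding Y_X[OF t, symmetric] by simp
qed

lemma small_parameter_exists:
  assumes "d > 0" "T > 0"
  obtains \<epsilon>s where "\<epsilon>s > 0" and "\<And>\<epsilon>. 0 < \<epsilon> \<Longrightarrow> \<epsilon> < \<epsilon>s \<Longrightarrow>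
    \<epsilon> \<le> 1 \<and> 2 * max (d / 2) (\<epsilon> * comparison_offset T) \<le> d \<and> 2 * (period_error_bound T * \<epsilon>) \<le> decay_rate (d / 2)"
proof
  define C where "C = comparison_offset T"
  define E where "E = period_error_bound T"
  have "C \<ge> 0" "E \<ge> 0" unfolding C_def E_def using comparison_offset_nonneg period_error_bound_nonneg assms(2) by simp_all
  have "decay_rate (d / 2) > 0"
    using class_K_strict[OF class_K_decay_rate, of 0 "d / 2"] class_K_zero[OF class_K_decay_rate] assms(1) by simp
  then show "min 1 (min (d / (2 * (C + 1))) (decay_rate (d / 2) / (2 * (E + 1)))) > 0"
    using assms(1) \<open>C \<ge> 0\<close> \<open>E \<ge> 0\<close> by simp
  fix \<epsilon> assume \<epsilon>: "0 < \<epsilon>" "\<epsilon> < min 1 (min (d / (2 * (C + 1))) (decay_rate (d / 2) / (2 * (E + 1))))"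
  then have "\<epsilon> * (2 * (C + 1)) < d" "\<epsilon> * (2 * (E + 1)) < decay_rate (d / 2)"
    using \<open>C \<ge> 0\<close> \<open>E \<ge> 0\<close> by (simp_all add: less_divide_eq)
  then show "\<epsilon> \<le> 1 \<and> 2 * max (d / 2) (\<epsilon> * comparison_offset T) \<le> d
      \<and> 2 * (period_error_bound T * \<epsilon>) \<le> decay_rate (d / 2)"
    using \<epsilon> unfolding C_def[symmetric] E_def[symmetric] by (simp add: algebra_simps)
qed

theorem es_UGpAS: "es_UGpAS b0 J xs r b \<omega>"
proof -
  obtain T where T: "T > 0" "\<forall>i\<in>{1..r}. trig_period (\<omega> i) T" using common_dither_period by blast
  obtain G where G: "class_K G" "\<And>x. norm x \<le> G (cost_gap x)" using norm_le_class_K_of_cost_gap by blast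
  define \<beta> where "\<beta> s t = G (2 * comparison_level decay_rate M s t)" for s t
  show ?thesis unfolding es_UGpAS_def
  proof (intro exI[of _ \<beta>] conjI allI impI)
    show "class_KL \<beta>" unfolding \<beta>_def by (rule class_KL_of_comparison_level[OF class_K_decay_rate M_pos G(1)])
    fix \<nu> :: real assume "\<nu> > 0"
    obtain d where d: "d > 0" "\<And>z. 0 \<le> z \<Longrightarrow> z \<le> d \<Longrightarrow> G z \<le> \<nu>"
      using class_K_small_values[OF G(1) \<open>\<nu> > 0\<close>] by blast
    obtain \<epsilon>s where "\<epsilon>s > 0" and small: "\<And>\<epsilon>. 0 < \<epsilon> \<Longrightarrow> \<epsilon> < \<epsilon>s \<Longrightarrow> \<epsilon> \<le> 1
        \<and> 2 * max (d / 2) (\<epsilon> * comparison_offset T) \<le> d \<and> 2 * (period_error_bound T * \<epsilon>) \<le> decay_rate (d / 2)"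
      using small_parameter_exists[OF d(1) T(1)] by blast
    show "\<exists>\<epsilon>s>0. \<forall>\<epsilon>. 0 < \<epsilon> \<and> \<epsilon> < \<epsilon>s \<longrightarrow>
      (\<forall>x0 \<tau>0 ts X T. 0 \<le> \<tau>0 \<and> es_solution b0 J xs r b \<omega> \<epsilon> x0 \<tau>0 ts X T \<longrightarrow>
        (\<exists>X' T'. es_solution b0 J xs r b \<omega> \<epsilon> x0 \<tau>0 \<infinity> X' T' \<and> (\<forall>t\<in>dom_ts ts. X' t = X t \<and> T' t = T t)) \<and>
        (\<forall>t\<in>dom_ts ts. norm (X t) \<le> \<beta> (norm x0) t + \<nu>))"
    proof (intro exI[of _ \<epsilon>s] conjI allI impI ballI)
      show "\<epsilon>s > 0" by fact
      fix \<epsilon> x0 \<tau>0 ts X \<tau>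
      assume \<epsilon>: "0 < \<epsilon> \<and> \<epsilon> < \<epsilon>s" and sol: "0 \<le> \<tau>0 \<and> es_solution b0 J xs r b \<omega> \<epsilon> x0 \<tau>0 ts X \<tau>"
      then have "\<epsilon> \<le> 1" using small by blast
      obtain Y where "es_solution b0 J xs r b \<omega> \<epsilon> x0 \<tau>0 \<infinity> Y (\<lambda>t. \<tau>0 + t / \<epsilon>\<^sup>2)"
        and "\<And>t. t \<in> dom_ts ts \<Longrightarrow> Y t = X t"
        using es_solution_extends \<epsilon> \<open>\<epsilon> \<le> 1\<close> sol by metis
      then show "\<exists>X' T'. es_solution b0 J xs r b \<omega> \<epsilon> x0 \<tau>0 \<infinity> X' T' \<and> (\<forall>t\<in>dom_ts ts. X' t = X t \<and> T' t = \<tau> t)"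
        using es_solution_phase[of \<epsilon> x0 \<tau>0 ts X \<tau>] sol
        by (intro exI[of _ Y] exI[of _ "\<lambda>t. \<tau>0 + t / \<epsilon>\<^sup>2"]) auto
      fix t assume "t \<in> dom_ts ts"
      then have "t \<ge> 0" by (simp add: dom_ts_def)
      have "d / 2 > 0" using d(1) by simp
      have "norm (X t) \<le> max (\<beta> (norm x0) t) (G (2 * max (d / 2) (\<epsilon> * comparison_offset T)))"
        using es_solution_practical_bound[OF G T _ \<open>\<epsilon> \<le> 1\<close> \<open>d / 2 > 0\<close> _ _ \<open>t \<in> dom_ts ts\<close>] small \<epsilon> sol
        unfolding \<beta>_def by blast
      moreover have "G (2 * max (d / 2) (\<epsilon> * comparison_offset T)) \<le> \<nu>"
        using d(2) small \<epsilon> \<open>d / 2 > 0\<close> by simp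
      moreover have "\<beta> (norm x0) t \<ge> 0"
        unfolding \<beta>_def using class_K_nonneg[OF G(1)] comparison_level_nonneg[OF class_K_decay_rate M_pos]
          \<open>t \<ge> 0\<close> by simp
      ultimately show "norm (X t) \<le> \<beta> (norm x0) t + \<nu>" using \<open>\<nu> > 0\<close> by linarith
    qed
  qed
qed

end

theorem theorem3:
  fixes b0 :: "'a::euclidean_space \<Rightarrow> 'a"
    and J :: "'a \<Rightarrow> real" and dJ :: "'a \<Rightarrow> 'a" and d2J :: "'a \<Rightarrow> ('a \<Rightarrow>\<^sub>L 'a)"
    and xs :: 'a and r :: nat and b :: "nat \<Rightarrow> nat \<Rightarrow> 'a" and \<omega> :: "nat \<Rightarrow> real"
    and \<gamma> \<kappa>3 M_J :: real and \<alpha>J :: "real \<Rightarrow> real"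
  assumes r_pos: "r \<ge> 1" and r_dim: "2 * r \<ge> DIM('a)"
    and \<omega>_pos: "\<forall>i\<in>{1..r}. \<omega> i > 0 \<and> \<omega> i \<in> \<rat>"
    and \<omega>_distinct: "inj_on \<omega> {1..r}"
    and J_deriv: "\<forall>x. (J has_derivative (\<lambda>h. dJ x \<bullet> h)) (at x)"
    and dJ_deriv: "\<forall>x. (dJ has_derivative blinfun_apply (d2J x)) (at x)"
    and d2J_cont: "continuous_on UNIV d2J"
    and xs_min: "\<forall>x. J xs \<le> J x"
    and excitation: "\<gamma> > 0" "\<forall>v. (\<Sum>i\<in>{1..r}. \<Sum>j\<in>{1,2}. (b i j \<bullet> v)\<^sup>2) \<ge> \<gamma> * (norm v)\<^sup>2"
    and reg_a: "\<forall>x. x \<noteq> xs \<longrightarrow> J x > J xs"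
    and reg_b: "\<forall>x. dJ x = 0 \<longleftrightarrow> x = xs"
    and reg_c: "\<exists>L_J>0. \<forall>x. norm (d2J x) \<le> L_J"
    and reg_d: "\<kappa>3 > 0" "\<forall>x. norm (b0 x) \<le> \<kappa>3 * norm (dJ x)"
    and reg_e: "\<exists>L0>0. \<forall>x1 x2. norm (b0 x1 - b0 x2) \<le> L0 * norm (x1 - x2)"
    and gamma_kappa: "\<gamma> > \<kappa>3"
    and radially_unbounded: "filterlim J at_top at_infinity"
    and alphaJ: "class_K \<alpha>J" and MJ: "M_J > 0"
    and grad_bounds: "\<forall>x. (\<alpha>J (norm (x - xs)))\<^sup>2 \<le> (norm (dJ x))\<^sup>2 \<and> (norm (dJ x))\<^sup>2 \<le> M_J\<^sup>2"
  shows "es_UGpAS b0 J xs r b \<omega>"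
proof -
  obtain LJ where LJ: "LJ > 0" "\<forall>x. norm (d2J x) \<le> LJ" using reg_c by blast
  obtain L0 where L0: "L0 > 0" "\<forall>x1 x2. norm (b0 x1 - b0 x2) \<le> L0 * norm (x1 - x2)" using reg_e by blast
  have "norm (dJ x) \<le> M_J" for x
    using grad_bounds MJ by (auto intro: power2_le_imp_le)
  moreover have "\<alpha>J (norm (x - xs)) \<le> norm (dJ x)" for x
    using grad_bounds by (auto intro: power2_le_imp_le)
  moreover have "norm (dJ x - dJ y) \<le> LJ * norm (x - y)" for x y
    using lipschitz_of_bounded_derivative[of dJ d2J] dJ_deriv LJ(2) by blast
  ultimately interpret extremum_seeking b0 J dJ xs r b \<omega> \<gamma> \<kappa>3 M_J LJ L0 \<alpha>J
    using assms LJ L0 by unfold_locales auto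
  show ?thesis by (rule es_UGpAS)
qed

end
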